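(* Let $n_1,n_2,n_3\ge 2$, $r\le\min\{n_1,n_2\}$, $b,c,\sigma>0$, and $\mathcal{X}^*=\mathcal{A}^*\diamond\mathcal{B}^*$ with $\mathcal{A}^*\in\mathbb{R}_+^{n_1\times r\times n_3}$, $\mathcal{B}^*\in\mathbb{R}_+^{r\times n_2\times n_3}$, $0\le\mathcal{X}^*_{ijk}\le c/2$, $0\le\mathcal{A}^*_{ijk}\le1$, $0\le\mathcal{B}^*_{ijk}\le b$. Let $4\le m\le n_1n_2n_3$, $\Omega\sim\mathrm{Bern}(\frac{m}{n_1n_2n_3})$, and $\mathcal{Y}_{ijk}=\mathcal{X}^*_{ijk}+\sigma\epsilon_{ijk}$ for $(i,j,k)\in\Omega$, with $\epsilon_{ijk}$ i.i.d. $N(0,1)$ (so $p_x$ is the $N(x,\sigma^2)$ density). Let $\beta=\max\left\{3,1+\frac{\log(3rn_3^{1.5}b/c)}{\log(n_1\vee n_2)}\right\}$, $\kappa=\frac{c^2}{2\sigma^2}$ and $\lambda=4(\beta+2)\left(1+\frac{2\kappa}{3}\right)\log(n_1\vee n_2)$. Then the estimator $\widetilde{\mathcal{X}}^\lambda$ satisfies \[ \frac{\mathbb{E}_{\Omega,\mathcal{Y}_\Omega}\|\widetilde{\mathcal{X}}^\lambda-\mathcal{X}^*\|_F^2}{n_1n_2n_3}\le\frac{22c^2\log(m)}{m}+16(3\sigma^2+2c^2)(\beta+2)\left(\frac{rn_1n_3+\|\mathcal{B}^*\|_0}{m}\right)\log(n_1\vee n_2). \]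
   Context: Tensor-tensor product $\diamond$: for $\mathcal{X}\in\mathbb{R}^{n_1\times n_2\times n_3}$ with frontal slices $\mathbf{X}^{(1)},\dots,\mathbf{X}^{(n_3)}$ and $\mathcal{Y}\in\mathbb{R}^{n_2\times n_4\times n_3}$, $\mathcal{X}\diamond\mathcal{Y}$ is obtained by multiplying the block-circulant matrix with $(p,q)$ block $\mathbf{X}^{((p-q)\bmod n_3+1)}$ by the vertical stack of the frontal slices of $\mathcal{Y}$ and folding back. $\|\cdot\|_0$ counts nonzero entries, $\|\cdot\|_F$ is the Frobenius norm, $m\vee n=\max\{m,n\}$. $\Omega\sim\mathrm{Bern}(\gamma)$: each index included independently with probability $\gamma$. With $\vartheta=2^{\lceil\beta\log_2(n_1\vee n_2)\rceil}$, $\mathfrak{L}$ = tensors in $\mathbb{R}_+^{n_1\times r\times n_3}$ with entries among $\vartheta$ uniformly spaced levels of $[0,1]$; $\mathfrak{D}$ = tensors in $\mathbb{R}_+^{r\times n_2\times n_3}$ with entries $0$ or among $\vartheta$ uniformly spaced levels of $[0,b]$; $\Gamma=\{\mathcal{A}\diamond\mathcal{B}:\mathcal{A}\in\mathfrak{L},\mathcal{B}\in\mathfrak{D},0\le(\mathcal{A}\diamond\mathcal{B})_{ijk}\le c\}$. Estimator: $\widetilde{\mathcal{X}}^\lambda\in\arg\min_{\mathcal{X}=\mathcal{A}\diamond\mathcal{B}\in\Gamma}\{-\log p_{\mathcal{X}_\Omega}(\mathcal{Y}_\Omega)+\lambda\|\mathcal{B}\|_0\}$ with $p_{\mathcal{X}_\Omega}(\mathcal{Y}_\Omega)=\prod_{(i,j,k)\in\Omega}p_{\mathcal{X}_{ijk}}(\mathcal{Y}_{ijk})$.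 *)

theory Defs
  imports "HOL-Probability.Probability"
begin

type_synonym tensor = "nat \<Rightarrow> nat \<Rightarrow> nat \<Rightarrow> real"
type_synonym idx = "nat \<times> nat \<times> nat"

text \<open>Tensors are functions on 0-based indices; only entries with indices in range matter.
  Tensor-tensor product (t-product): output frontal slice k is
  sum over q of A^((k-q) mod n3) times B^(q).\<close>
definition tprod :: "nat \<Rightarrow> nat \<Rightarrow> tensor \<Rightarrow> tensor \<Rightarrow> tensor" where
  "tprod r n3 A B = (\<lambda>i j k. \<Sum>q<n3. \<Sum>l<r. A i l ((k + n3 - q) mod n3) * B l j q)"

definition index_set :: "nat \<Rightarrow> nat \<Rightarrow> nat \<Rightarrow> idx set" where
  "index_set n1 n2 n3 = {..<n1} \<times> {..<n2} \<times> {..<n3}"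

definition frob_sq :: "nat \<Rightarrow> nat \<Rightarrow> nat \<Rightarrow> tensor \<Rightarrow> real" where
  "frob_sq n1 n2 n3 X = (\<Sum>i<n1. \<Sum>j<n2. \<Sum>k<n3. (X i j k)\<^sup>2)"

definition l0norm :: "nat \<Rightarrow> nat \<Rightarrow> nat \<Rightarrow> tensor \<Rightarrow> nat" where
  "l0norm r n2 n3 B = card {(l, j, k). l < r \<and> j < n2 \<and> k < n3 \<and> B l j k \<noteq> 0}"

definition levels :: "real \<Rightarrow> real \<Rightarrow> nat \<Rightarrow> real set" where
  "levels lo hi \<theta> = {lo + real t * (hi - lo) / (real \<theta> - 1) | t. t < \<theta>}"

definition quant_levels :: "real \<Rightarrow> nat \<Rightarrow> nat \<Rightarrow> nat" where
  "quant_levels \<beta> n1 n2 = 2 ^ nat \<lceil>\<beta> * log 2 (real (max n1 n2))\<rceil>"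

definition LSet :: "nat \<Rightarrow> nat \<Rightarrow> nat \<Rightarrow> nat \<Rightarrow> tensor set" where
  "LSet n1 r n3 \<theta> = {A. \<forall>i<n1. \<forall>l<r. \<forall>k<n3. A i l k \<in> levels 0 1 \<theta>}"

definition DSet :: "nat \<Rightarrow> nat \<Rightarrow> nat \<Rightarrow> nat \<Rightarrow> real \<Rightarrow> tensor set" where
  "DSet r n2 n3 \<theta> b = {B. \<forall>l<r. \<forall>j<n2. \<forall>k<n3. B l j k = 0 \<or> B l j k \<in> levels 0 b \<theta>}"

definition feasible :: "nat \<Rightarrow> nat \<Rightarrow> nat \<Rightarrow> nat \<Rightarrow> nat \<Rightarrow> real \<Rightarrow> real \<Rightarrow> tensor \<Rightarrow> tensor \<Rightarrow> bool" where
  "feasible n1 n2 n3 r \<theta> b c A B \<longleftrightarrow> A \<in> LSet n1 r n3 \<theta> \<and> B \<in> DSet r n2 n3 \<theta> b \<and>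
     (\<forall>i<n1. \<forall>j<n2. \<forall>k<n3. 0 \<le> tprod r n3 A B i j k \<and> tprod r n3 A B i j k \<le> c)"

definition neg_loglik :: "real \<Rightarrow> idx set \<Rightarrow> tensor \<Rightarrow> (idx \<Rightarrow> real) \<Rightarrow> real" where
  "neg_loglik \<sigma> \<Omega> X Y = (\<Sum>(i, j, k)\<in>\<Omega>. - ln (normal_density (X i j k) \<sigma> (Y (i, j, k))))"

definition objective :: "nat \<Rightarrow> nat \<Rightarrow> nat \<Rightarrow> real \<Rightarrow> real \<Rightarrow> idx set \<Rightarrow> (idx \<Rightarrow> real) \<Rightarrow> tensor \<Rightarrow> tensor \<Rightarrow> real" where
  "objective r n2 n3 \<sigma> lam \<Omega> Y A B = neg_loglik \<sigma> \<Omega> (tprod r n3 A B) Y + lam * real (l0norm r n2 n3 B)"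

definition is_pml_estimator ::
  "nat \<Rightarrow> nat \<Rightarrow> nat \<Rightarrow> nat \<Rightarrow> nat \<Rightarrow> real \<Rightarrow> real \<Rightarrow> real \<Rightarrow> real \<Rightarrow>
   (idx set \<Rightarrow> (idx \<Rightarrow> real) \<Rightarrow> tensor) \<Rightarrow> bool" where
  "is_pml_estimator n1 n2 n3 r \<theta> b c \<sigma> lam est \<longleftrightarrow>
     (\<forall>\<Omega> Y. \<Omega> \<subseteq> index_set n1 n2 n3 \<longrightarrow>
        (\<exists>A B. feasible n1 n2 n3 r \<theta> b c A B \<and> est \<Omega> Y = tprod r n3 A B \<and>
           (\<forall>A' B'. feasible n1 n2 n3 r \<theta> b c A' B' \<longrightarrow>
              objective r n2 n3 \<sigma> lam \<Omega> Y A B \<le> objective r n2 n3 \<sigma> lam \<Omega> Y A' B')))"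

text \<open>Sample space: for each index an independent pair (membership in Omega ~ Bern(gamma),
  standard normal noise eps).\<close>
definition sample_space :: "nat \<Rightarrow> nat \<Rightarrow> nat \<Rightarrow> real \<Rightarrow> (idx \<Rightarrow> bool \<times> real) measure" where
  "sample_space n1 n2 n3 \<gamma> = PiM (index_set n1 n2 n3)
     (\<lambda>_. pair_measure (measure_pmf (bernoulli_pmf \<gamma>)) (density lborel std_normal_density))"

definition Omega_of :: "nat \<Rightarrow> nat \<Rightarrow> nat \<Rightarrow> (idx \<Rightarrow> bool \<times> real) \<Rightarrow> idx set" where
  "Omega_of n1 n2 n3 \<omega> = {t \<in> index_set n1 n2 n3. fst (\<omega> t)}"

text \<open>Observed data Y_Omega (set to 0 outside Omega, where it is not observed).\<close>
definition Y_of :: "nat \<Rightarrow> nat \<Rightarrow> nat \<Rightarrow> real \<Rightarrow> tensor \<Rightarrow> (idx \<Rightarrow> bool \<times> real) \<Rightarrow> idx \<Rightarrow> real" where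
  "Y_of n1 n2 n3 \<sigma> Xs \<omega> = (\<lambda>(i, j, k). if (i, j, k) \<in> Omega_of n1 n2 n3 \<omega>
       then Xs i j k + \<sigma> * snd (\<omega> (i, j, k)) else 0)"

end

(*
  Compare the estimator with the truth rounded down to the grid on which it searches.  For each
  grid candidate X, let Z_X be a times the squared error of X plus s times the gain in penalized
  log-likelihood of X over the rounded truth.  The entries are independent, and for a single
  entry the Bernoulli sampling and the Gaussian noise have an explicit moment generating
  function; this gives E exp Z_X <= exp (- s lam ||B||_0) up to a factor caused by the rounding.
  Because the estimator maximizes the penalized likelihood, a times its squared error is at most
  max_X Z_X <= ln (sum_X exp Z_X) plus a term of the rounded truth, so its expectation is at most
  the logarithm of the sparsity-weighted size of the grid.  With theta of order max(n1, n2)^beta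
  the rounding error is negligible, and s = 3 sigma^2 / (2 (3 sigma^2 + c^2)) makes
  s lam = 2 (beta + 2) ln max(n1, n2), so that this logarithm is of order
  (r n1 n3 + ||B||_0) (beta + 2) ln max(n1, n2).
*)
theory Submission
  imports Defs
begin

section \<open>Gaussian observations with Bernoulli sampling\<close>

abbreviation obs_noise :: "real \<Rightarrow> (bool \<times> real) measure" where
  "obs_noise \<gamma> \<equiv> measure_pmf (bernoulli_pmf \<gamma>) \<Otimes>\<^sub>M std_normal_distribution"

lemma prob_space_obs_noise: "prob_space (obs_noise \<gamma>)"
  by (intro prob_space_pair prob_space_normal_density prob_space_measure_pmf) simp

lemma nn_integral_std_normal_exp_affine:
  "(\<integral>\<^sup>+ y. ennreal (exp (\<alpha> + \<beta> * y)) \<partial>std_normal_distribution) = ennreal (exp (\<alpha> + \<beta>\<^sup>2 / 2))"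
proof -
  interpret shifted: prob_space "density lborel (normal_density \<beta> 1)"
    by (rule prob_space_normal_density) simp
  have completed_square: "std_normal_density y * exp (\<alpha> + \<beta> * y) = exp (\<alpha> + \<beta>\<^sup>2 / 2) * normal_density \<beta> 1 y" for y
    unfolding normal_density_def by (simp add: mult_exp_exp power2_eq_square field_simps)
  have "(\<integral>\<^sup>+ y. ennreal (exp (\<alpha> + \<beta> * y)) \<partial>std_normal_distribution)
      = (\<integral>\<^sup>+ y. ennreal (exp (\<alpha> + \<beta>\<^sup>2 / 2)) * ennreal (normal_density \<beta> 1 y) \<partial>lborel)"
    by (subst nn_integral_density)
       (auto intro!: nn_integral_cong simp: completed_square normal_density_nonneg simp flip: ennreal_mult)
  also have "\<dots> = ennreal (exp (\<alpha> + \<beta>\<^sup>2 / 2)) * emeasure (density lborel (normal_density \<beta> 1)) UNIV"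
    by (subst nn_integral_cmult) (auto simp: emeasure_density normal_density_def)
  finally show ?thesis
    using shifted.emeasure_space_1 by simp
qed

lemma nn_integral_obs_noise:
  assumes "0 \<le> \<gamma>" "\<gamma> \<le> 1" and [measurable]: "f \<in> borel_measurable (obs_noise \<gamma>)"
  shows "(\<integral>\<^sup>+ z. f z \<partial>obs_noise \<gamma>) = ennreal (1 - \<gamma>) * (\<integral>\<^sup>+ y. f (False, y) \<partial>std_normal_distribution)
           + ennreal \<gamma> * (\<integral>\<^sup>+ y. f (True, y) \<partial>std_normal_distribution)"
proof -
  interpret std_normal: prob_space std_normal_distribution
    by (rule prob_space_normal_density) simp
  have "(\<integral>\<^sup>+ z. f z \<partial>obs_noise \<gamma>)
      = (\<integral>\<^sup>+ x. \<integral>\<^sup>+ y. f (x, y) \<partial>std_normal_distribution \<partial>measure_pmf (bernoulli_pmf \<gamma>))"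
    by (rule std_normal.nn_integral_fst[symmetric]) simp
  also have "\<dots> = (\<Sum>x\<in>UNIV. ennreal (pmf (bernoulli_pmf \<gamma>) x) * (\<integral>\<^sup>+ y. f (x, y) \<partial>std_normal_distribution))"
    by (simp add: nn_integral_measure_pmf nn_integral_count_space_finite)
  finally show ?thesis
    using assms by (simp add: UNIV_bool add.commute)
qed

lemma nn_integral_PiM_component:
  assumes "\<And>i. i \<in> I \<Longrightarrow> prob_space (M i)" "i \<in> I" "f \<in> borel_measurable (M i)"
  shows "(\<integral>\<^sup>+ \<omega>. f (\<omega> i) \<partial>PiM I M) = (\<integral>\<^sup>+ x. f x \<partial>M i)"
proof -
  have "(\<integral>\<^sup>+ \<omega>. f (\<omega> i) \<partial>PiM I M) = (\<integral>\<^sup>+ x. f x \<partial>distr (PiM I M) (M i) (\<lambda>\<omega>. \<omega> i))"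
    using assms by (simp add: nn_integral_distr measurable_component_singleton)
  then show ?thesis
    by (simp add: distr_PiM_component assms)
qed

lemma nn_integral_exp_masked_gaussian_sum:
  assumes "finite I" "0 \<le> \<gamma>" "\<gamma> \<le> 1"
  shows "(\<integral>\<^sup>+ \<omega>. ennreal (exp (\<Sum>t\<in>I. if fst (\<omega> t) then \<alpha> t + \<beta> t * snd (\<omega> t) else 0))
            \<partial>PiM I (\<lambda>_. obs_noise \<gamma>))
         = ennreal (\<Prod>t\<in>I. 1 - \<gamma> + \<gamma> * exp (\<alpha> t + (\<beta> t)\<^sup>2 / 2))"
proof -
  interpret std_normal: prob_space std_normal_distribution
    by (rule prob_space_normal_density) simp
  interpret product_sigma_finite "\<lambda>_. obs_noise \<gamma>"
    unfolding product_sigma_finite_def using prob_space_obs_noise prob_space_imp_sigma_finite by blast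
  define h where "h t z = ennreal (if fst z then exp (\<alpha> t + \<beta> t * snd z) else 1)" for t z
  have h_measurable[measurable]: "h t \<in> borel_measurable (obs_noise \<gamma>)" for t
    unfolding h_def by measurable
  have "ennreal (exp (\<Sum>t\<in>I. if fst (\<omega> t) then \<alpha> t + \<beta> t * snd (\<omega> t) else 0)) = (\<Prod>t\<in>I. h t (\<omega> t))" for \<omega>
    unfolding h_def exp_sum[OF assms(1)] by (subst prod_ennreal) (auto intro!: arg_cong[where f = ennreal] prod.cong)
  then have "(\<integral>\<^sup>+ \<omega>. ennreal (exp (\<Sum>t\<in>I. if fst (\<omega> t) then \<alpha> t + \<beta> t * snd (\<omega> t) else 0))
            \<partial>PiM I (\<lambda>_. obs_noise \<gamma>)) = (\<Prod>t\<in>I. \<integral>\<^sup>+ z. h t z \<partial>obs_noise \<gamma>)"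
    using assms(1) by (simp add: product_nn_integral_prod)
  also have "\<dots> = (\<Prod>t\<in>I. ennreal (1 - \<gamma> + \<gamma> * exp (\<alpha> t + (\<beta> t)\<^sup>2 / 2)))"
  proof (intro prod.cong refl)
    fix t
    show "(\<integral>\<^sup>+ z. h t z \<partial>obs_noise \<gamma>) = ennreal (1 - \<gamma> + \<gamma> * exp (\<alpha> t + (\<beta> t)\<^sup>2 / 2))"
      using assms std_normal.emeasure_space_1
      by (subst nn_integral_obs_noise)
         (simp_all add: h_def nn_integral_std_normal_exp_affine flip: ennreal_mult ennreal_plus)
  qed
  also have "\<dots> = ennreal (\<Prod>t\<in>I. 1 - \<gamma> + \<gamma> * exp (\<alpha> t + (\<beta> t)\<^sup>2 / 2))"
    using assms by (intro prod_ennreal) simp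
  finally show ?thesis .
qed

lemma nn_integral_masked_sum:
  assumes "finite I" "0 \<le> \<gamma>" "\<gamma> \<le> 1" "\<And>t. t \<in> I \<Longrightarrow> 0 \<le> x t"
  shows "(\<integral>\<^sup>+ \<omega>. ennreal (\<Sum>t\<in>I. if fst (\<omega> t) then x t else 0) \<partial>PiM I (\<lambda>_. obs_noise \<gamma>))
         = ennreal (\<gamma> * (\<Sum>t\<in>I. x t))"
proof -
  interpret std_normal: prob_space std_normal_distribution
    by (rule prob_space_normal_density) simp
  have "(\<integral>\<^sup>+ \<omega>. ennreal (\<Sum>t\<in>I. if fst (\<omega> t) then x t else 0) \<partial>PiM I (\<lambda>_. obs_noise \<gamma>))
      = (\<integral>\<^sup>+ \<omega>. (\<Sum>t\<in>I. ennreal (if fst (\<omega> t) then x t else 0)) \<partial>PiM I (\<lambda>_. obs_noise \<gamma>))"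
    using assms by (intro nn_integral_cong) (simp add: sum_ennreal)
  also have "\<dots> = (\<Sum>t\<in>I. \<integral>\<^sup>+ \<omega>. ennreal (if fst (\<omega> t) then x t else 0) \<partial>PiM I (\<lambda>_. obs_noise \<gamma>))"
    by (rule nn_integral_sum) measurable
  also have "\<dots> = (\<Sum>t\<in>I. ennreal (\<gamma> * x t))"
    using assms std_normal.emeasure_space_1
    by (intro sum.cong refl, subst nn_integral_PiM_component[where f = "\<lambda>z. ennreal (if fst z then x t else 0)" for t])
       (simp_all add: prob_space_obs_noise nn_integral_obs_noise flip: ennreal_mult)
  finally show ?thesis
    using assms by (simp add: sum_ennreal sum_distrib_left)
qed

lemma nn_integral_masked_penalty:
  assumes "finite I" "0 \<le> \<gamma>" "\<gamma> \<le> 1" "0 \<le> s" "0 \<le> p" "\<And>t. t \<in> I \<Longrightarrow> 0 \<le> x t"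
  shows "(\<integral>\<^sup>+ \<omega>. ennreal (s * ((\<Sum>t\<in>I. if fst (\<omega> t) then x t else 0) + p)) \<partial>PiM I (\<lambda>_. obs_noise \<gamma>))
         = ennreal (s * (\<gamma> * (\<Sum>t\<in>I. x t) + p))"
proof -
  interpret prob_space "PiM I (\<lambda>_. obs_noise \<gamma>)"
    by (intro prob_space_PiM prob_space_obs_noise)
  define X where "X \<omega> = (\<Sum>t\<in>I. if fst (\<omega> t) then x t else 0)" for \<omega> :: "'a \<Rightarrow> bool \<times> real"
  have X_measurable[measurable]: "X \<in> borel_measurable (PiM I (\<lambda>_. obs_noise \<gamma>))"
    unfolding X_def by measurable
  have "(\<integral>\<^sup>+ \<omega>. ennreal (s * (X \<omega> + p)) \<partial>PiM I (\<lambda>_. obs_noise \<gamma>))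
      = (\<integral>\<^sup>+ \<omega>. ennreal s * ennreal (X \<omega>) + ennreal (s * p) \<partial>PiM I (\<lambda>_. obs_noise \<gamma>))"
    using assms unfolding X_def by (intro nn_integral_cong) (simp add: distrib_left ennreal_mult' sum_nonneg)
  also have "\<dots> = ennreal s * (\<integral>\<^sup>+ \<omega>. ennreal (X \<omega>) \<partial>PiM I (\<lambda>_. obs_noise \<gamma>)) + ennreal (s * p)"
    by (simp add: nn_integral_add nn_integral_cmult emeasure_space_1)
  also have "(\<integral>\<^sup>+ \<omega>. ennreal (X \<omega>) \<partial>PiM I (\<lambda>_. obs_noise \<gamma>)) = ennreal (\<gamma> * (\<Sum>t\<in>I. x t))"
    unfolding X_def by (rule nn_integral_masked_sum) (use assms in auto)
  also have "ennreal s * \<dots> + ennreal (s * p) = ennreal (s * (\<gamma> * (\<Sum>t\<in>I. x t) + p))"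
    using assms by (simp add: distrib_left ennreal_mult' sum_nonneg)
  finally show ?thesis
    unfolding X_def .
qed

section \<open>Exponential moment bounds\<close>

lemma nn_integral_le_via_exp_moments:
  assumes M: "prob_space M" and C: "finite C" and T: "1 \<le> T"
    and Z[measurable]: "\<And>P. P \<in> C \<Longrightarrow> Z P \<in> borel_measurable M"
    and h[measurable]: "h \<in> borel_measurable M" and h_nonneg: "\<And>\<omega>. 0 \<le> h \<omega>"
    and moments: "(\<Sum>P\<in>C. \<integral>\<^sup>+ \<omega>. ennreal (exp (Z P \<omega>)) \<partial>M) \<le> ennreal T"
    and dominated: "\<And>\<omega>. \<omega> \<in> space M \<Longrightarrow> \<exists>P\<in>C. g \<omega> \<le> Z P \<omega> + h \<omega>"
  shows "(\<integral>\<^sup>+ \<omega>. ennreal (g \<omega>) \<partial>M) \<le> ennreal (ln T + 1) + (\<integral>\<^sup>+ \<omega>. ennreal (h \<omega>) \<partial>M)"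
proof -
  interpret prob_space M by (fact M)
  define S where "S \<omega> = (\<Sum>P\<in>C. exp (Z P \<omega>))" for \<omega>
  have S_measurable[measurable]: "S \<in> borel_measurable M"
    unfolding S_def by measurable
  have pointwise: "g \<omega> \<le> ln T + 1 / T * S \<omega> + h \<omega>" if \<omega>: "\<omega> \<in> space M" for \<omega>
  proof -
    obtain P where "P \<in> C" and g_le: "g \<omega> \<le> Z P \<omega> + h \<omega>"
      using dominated[OF \<omega>] by blast
    then have "exp (Z P \<omega>) \<le> S \<omega>"
      unfolding S_def using C by (intro member_le_sum) auto
    then have "Z P \<omega> \<le> ln (S \<omega>)" and S_pos: "0 < S \<omega>"
      using exp_gt_zero[of "Z P \<omega>"] by (auto simp: ln_ge_iff simp del: exp_gt_zero)
    moreover have "ln (S \<omega>) \<le> ln T + S \<omega> / T - 1"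
      using ln_le_minus_one[of "S \<omega> / T"] S_pos T by (simp add: ln_div)
    ultimately show ?thesis
      using g_le T by (simp add: divide_inverse mult.commute)
  qed
  have "(\<integral>\<^sup>+ \<omega>. ennreal (g \<omega>) \<partial>M)
      \<le> (\<integral>\<^sup>+ \<omega>. ennreal (ln T) + ennreal (1 / T) * ennreal (S \<omega>) + ennreal (h \<omega>) \<partial>M)"
  proof (intro nn_integral_mono)
    fix \<omega> assume "\<omega> \<in> space M"
    have S_nonneg: "0 \<le> S \<omega>"
      unfolding S_def by (intro sum_nonneg) simp
    have "ennreal (g \<omega>) \<le> ennreal (ln T + 1 / T * S \<omega> + h \<omega>)"
      using pointwise[OF \<open>\<omega> \<in> space M\<close>] by (rule ennreal_leI)
    also have "\<dots> = ennreal (ln T + 1 / T * S \<omega>) + ennreal (h \<omega>)"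
      using T S_nonneg h_nonneg[of \<omega>] by (intro ennreal_plus) auto
    also have "ennreal (ln T + 1 / T * S \<omega>) = ennreal (ln T) + ennreal (1 / T) * ennreal (S \<omega>)"
      using T S_nonneg by (subst ennreal_mult[symmetric]) (auto intro: ennreal_plus)
    finally show "ennreal (g \<omega>) \<le> ennreal (ln T) + ennreal (1 / T) * ennreal (S \<omega>) + ennreal (h \<omega>)" .
  qed
  also have "\<dots> = ennreal (ln T) + ennreal (1 / T) * (\<integral>\<^sup>+ \<omega>. ennreal (S \<omega>) \<partial>M) + (\<integral>\<^sup>+ \<omega>. ennreal (h \<omega>) \<partial>M)"
    by (simp add: nn_integral_add nn_integral_cmult emeasure_space_1)
  also have "(\<integral>\<^sup>+ \<omega>. ennreal (S \<omega>) \<partial>M) = (\<Sum>P\<in>C. \<integral>\<^sup>+ \<omega>. ennreal (exp (Z P \<omega>)) \<partial>M)"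
  proof -
    have "(\<integral>\<^sup>+ \<omega>. ennreal (S \<omega>) \<partial>M) = (\<integral>\<^sup>+ \<omega>. (\<Sum>P\<in>C. ennreal (exp (Z P \<omega>))) \<partial>M)"
      unfolding S_def by (intro nn_integral_cong) (simp add: sum_ennreal)
    also have "\<dots> = (\<Sum>P\<in>C. \<integral>\<^sup>+ \<omega>. ennreal (exp (Z P \<omega>)) \<partial>M)"
      by (intro nn_integral_sum) simp
    finally show ?thesis .
  qed
  also have "ennreal (1 / T) * \<dots> \<le> ennreal (1 / T) * ennreal T"
    using moments by (rule mult_left_mono) simp
  also have "ennreal (1 / T) * ennreal T = 1"
    using T by (simp add: ennreal_mult[symmetric])
  finally show ?thesis
    using T by (simp add: ennreal_plus)
qed

lemma nn_integral_le_divide: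
  fixes a B :: real
  assumes "0 < a" "\<And>x. 0 \<le> f x" "f \<in> borel_measurable M"
    and "(\<integral>\<^sup>+ x. ennreal (a * f x) \<partial>M) \<le> ennreal B"
  shows "(\<integral>\<^sup>+ x. ennreal (f x) \<partial>M) \<le> ennreal (B / a)"
proof -
  have "(\<integral>\<^sup>+ x. ennreal (f x) \<partial>M) = ennreal (1 / a) * (\<integral>\<^sup>+ x. ennreal (a * f x) \<partial>M)"
    using assms by (subst nn_integral_cmult[symmetric]) (auto simp: ennreal_mult'[symmetric])
  also have "\<dots> \<le> ennreal (1 / a) * ennreal B"
    using assms(4) by (rule mult_left_mono) simp
  also have "\<dots> = ennreal (B / a)"
    using assms(1) by (subst ennreal_mult'[symmetric]) auto
  finally show ?thesis .
qed

lemma exp_le_one_plus_two_mul: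
  fixes v :: real
  assumes "0 \<le> v" "v \<le> 1"
  shows "exp v \<le> 1 + 2 * v"
proof -
  have "exp (v * 1) \<le> 1 - v + v * exp 1"
    using convex_onD[OF exp_convex, of v 0 1] assms by (simp add: algebra_simps)
  moreover have "v * exp 1 \<le> v * 3"
    using assms exp_le by (intro mult_left_mono) auto
  ultimately show ?thesis by simp
qed

lemma bernoulli_mixture_exp_le:
  fixes \<gamma> t U v :: real
  assumes "0 \<le> \<gamma>" "\<gamma> \<le> 1" "0 \<le> t" "t \<le> 1" "0 \<le> U" "0 \<le> v" "v \<le> 1"
  shows "1 - \<gamma> + \<gamma> * exp (v - t * U) \<le> exp (2 * \<gamma> * v - \<gamma> * (1 - exp (- U)) * t)"
proof -
  have chord: "exp (t * (- U)) \<le> 1 - t + t * exp (- U)"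
    using convex_onD[OF exp_convex, of t 0 "- U"] assms by (simp add: algebra_simps)
  have "exp (v - t * U) = exp (t * (- U)) * exp v"
    by (simp add: exp_add[symmetric])
  also have "\<dots> \<le> exp (t * (- U)) * (1 + 2 * v)"
    using exp_le_one_plus_two_mul assms by simp
  also have "\<dots> \<le> 1 - t + t * exp (- U) + 2 * v"
    using chord assms mult_left_le[of "exp (t * (- U))" "2 * v"] by (simp add: algebra_simps)
  finally have "1 - \<gamma> + \<gamma> * exp (v - t * U) \<le> 1 - \<gamma> + \<gamma> * (1 - t + t * exp (- U) + 2 * v)"
    using assms by (intro add_left_mono mult_left_mono) auto
  also have "\<dots> = 1 + (2 * \<gamma> * v - \<gamma> * (1 - exp (- U)) * t)"
    by (simp add: algebra_simps)
  also have "\<dots> \<le> exp (2 * \<gamma> * v - \<gamma> * (1 - exp (- U)) * t)"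
    by (rule exp_ge_add_one_self[simplified add.commute])
  finally show ?thesis .
qed

lemma gaussian_mgf_exponent_le:
  fixes s \<sigma> d q :: real
  assumes "0 < s" "s \<le> 1 / 2" "0 < \<sigma>"
  shows "(s\<^sup>2 * (d - q)\<^sup>2 - s * d\<^sup>2) / (2 * \<sigma>\<^sup>2) \<le> 3 * s\<^sup>2 * q\<^sup>2 / (2 * \<sigma>\<^sup>2) - s * d\<^sup>2 / (8 * \<sigma>\<^sup>2)"
proof -
  have "(d - q)\<^sup>2 \<le> 3 / 2 * d\<^sup>2 + 3 * q\<^sup>2"
    using zero_le_power2[of "d + 2 * q"] by (simp add: power2_eq_square algebra_simps)
  then have "s\<^sup>2 * (d - q)\<^sup>2 \<le> s\<^sup>2 * (3 / 2 * d\<^sup>2 + 3 * q\<^sup>2)"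
    by (simp add: mult_left_mono)
  moreover have "s\<^sup>2 * (3 / 2) * d\<^sup>2 \<le> s * (3 / 4) * d\<^sup>2"
    using assms by (intro mult_right_mono) (auto simp: power2_eq_square)
  ultimately have "s\<^sup>2 * (d - q)\<^sup>2 - s * d\<^sup>2 \<le> 3 * s\<^sup>2 * q\<^sup>2 - s * d\<^sup>2 / 4"
    by (simp add: algebra_simps)
  then have "(s\<^sup>2 * (d - q)\<^sup>2 - s * d\<^sup>2) / (2 * \<sigma>\<^sup>2) \<le> (3 * s\<^sup>2 * q\<^sup>2 - s * d\<^sup>2 / 4) / (2 * \<sigma>\<^sup>2)"
    by (rule divide_right_mono) simp
  then show ?thesis
    using assms by (simp add: diff_divide_distrib)
qed

section \<open>The Chernoff exponent of a candidate\<close>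

definition misfit :: "real \<Rightarrow> 'i set \<Rightarrow> ('i \<Rightarrow> real) \<Rightarrow> ('i \<Rightarrow> bool \<times> real) \<Rightarrow> real" where
  "misfit \<sigma> I d \<omega> = (\<Sum>t\<in>I. if fst (\<omega> t) then (\<sigma> * snd (\<omega> t) - d t)\<^sup>2 / (2 * \<sigma>\<^sup>2) else 0)"

definition chernoff_exponent ::
  "real \<Rightarrow> real \<Rightarrow> 'i set \<Rightarrow> ('i \<Rightarrow> real) \<Rightarrow> ('i \<Rightarrow> real) \<Rightarrow> ('i \<Rightarrow> bool \<times> real) \<Rightarrow> real" where
  "chernoff_exponent \<sigma> s I d q \<omega> =
     (\<Sum>t\<in>I. if fst (\<omega> t) then - s * (d t)\<^sup>2 / (2 * \<sigma>\<^sup>2) + s * (d t - q t) / \<sigma> * snd (\<omega> t) else 0)"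

lemma chernoff_exponent_eq_misfit:
  assumes "\<sigma> \<noteq> 0"
  shows "chernoff_exponent \<sigma> s I d q \<omega> = s * (misfit \<sigma> I q \<omega> - misfit \<sigma> I d \<omega>)
           - s * (\<Sum>t\<in>I. if fst (\<omega> t) then (q t)\<^sup>2 / (2 * \<sigma>\<^sup>2) else 0)"
  unfolding chernoff_exponent_def misfit_def sum_subtractf[symmetric] sum_distrib_left
  using assms by (intro sum.cong refl) (simp add: field_simps power2_eq_square)

lemma chernoff_exponent_measurable [measurable]:
  "chernoff_exponent \<sigma> s I d q \<in> borel_measurable (PiM I (\<lambda>_. obs_noise \<gamma>))"
  unfolding chernoff_exponent_def by measurable

lemma nn_integral_exp_chernoff_exponent_le:
  assumes "finite I" "0 \<le> \<gamma>" "\<gamma> \<le> 1" "0 < s" "s \<le> 1 / 2" "0 < \<sigma>" "0 < c"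
    and d: "\<And>t. t \<in> I \<Longrightarrow> \<bar>d t\<bar> \<le> c" and q: "\<And>t. t \<in> I \<Longrightarrow> 3 * s\<^sup>2 * (q t)\<^sup>2 \<le> 2 * \<sigma>\<^sup>2"
  defines "a \<equiv> \<gamma> * (1 - exp (- (s * c\<^sup>2 / (8 * \<sigma>\<^sup>2)))) / c\<^sup>2"
  shows "(\<integral>\<^sup>+ \<omega>. ennreal (exp (chernoff_exponent \<sigma> s I d q \<omega>)) \<partial>PiM I (\<lambda>_. obs_noise \<gamma>))
     \<le> ennreal (exp (3 * \<gamma> * s\<^sup>2 * (\<Sum>t\<in>I. (q t)\<^sup>2) / \<sigma>\<^sup>2 - a * (\<Sum>t\<in>I. (d t)\<^sup>2)))"
proof -
  define U where "U = s * c\<^sup>2 / (8 * \<sigma>\<^sup>2)"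
  have coordinate: "1 - \<gamma> + \<gamma> * exp (- s * (d t)\<^sup>2 / (2 * \<sigma>\<^sup>2) + (s * (d t - q t) / \<sigma>)\<^sup>2 / 2)
      \<le> exp (3 * \<gamma> * s\<^sup>2 * (q t)\<^sup>2 / \<sigma>\<^sup>2 - a * (d t)\<^sup>2)" if t: "t \<in> I" for t
  proof -
    have "- s * (d t)\<^sup>2 / (2 * \<sigma>\<^sup>2) + (s * (d t - q t) / \<sigma>)\<^sup>2 / 2
        = (s\<^sup>2 * (d t - q t)\<^sup>2 - s * (d t)\<^sup>2) / (2 * \<sigma>\<^sup>2)"
      by (simp add: power_divide power_mult_distrib diff_divide_distrib)
    also have "\<dots> \<le> 3 * s\<^sup>2 * (q t)\<^sup>2 / (2 * \<sigma>\<^sup>2) - s * (d t)\<^sup>2 / (8 * \<sigma>\<^sup>2)"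
      using assms by (intro gaussian_mgf_exponent_le) auto
    also have "\<dots> = 3 * s\<^sup>2 * (q t)\<^sup>2 / (2 * \<sigma>\<^sup>2) - (d t)\<^sup>2 / c\<^sup>2 * U"
      unfolding U_def using \<open>0 < c\<close> by simp
    finally have "1 - \<gamma> + \<gamma> * exp (- s * (d t)\<^sup>2 / (2 * \<sigma>\<^sup>2) + (s * (d t - q t) / \<sigma>)\<^sup>2 / 2)
        \<le> 1 - \<gamma> + \<gamma> * exp (3 * s\<^sup>2 * (q t)\<^sup>2 / (2 * \<sigma>\<^sup>2) - (d t)\<^sup>2 / c\<^sup>2 * U)"
      using assms by (intro add_left_mono mult_left_mono) auto
    also have "\<dots> \<le> exp (2 * \<gamma> * (3 * s\<^sup>2 * (q t)\<^sup>2 / (2 * \<sigma>\<^sup>2)) - \<gamma> * (1 - exp (- U)) * ((d t)\<^sup>2 / c\<^sup>2))"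
    proof (rule bernoulli_mixture_exp_le)
      show "(d t)\<^sup>2 / c\<^sup>2 \<le> 1"
        using d[OF t] \<open>0 < c\<close> by (simp add: abs_le_square_iff[symmetric])
      show "3 * s\<^sup>2 * (q t)\<^sup>2 / (2 * \<sigma>\<^sup>2) \<le> 1"
        using q[OF t] \<open>0 < \<sigma>\<close> by (simp add: pos_divide_le_eq)
    qed (use assms U_def in auto)
    also have "\<dots> = exp (3 * \<gamma> * s\<^sup>2 * (q t)\<^sup>2 / \<sigma>\<^sup>2 - a * (d t)\<^sup>2)"
      unfolding a_def U_def by simp
    finally show ?thesis .
  qed
  have "(\<integral>\<^sup>+ \<omega>. ennreal (exp (chernoff_exponent \<sigma> s I d q \<omega>)) \<partial>PiM I (\<lambda>_. obs_noise \<gamma>))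
      = ennreal (\<Prod>t\<in>I. 1 - \<gamma> + \<gamma> * exp (- s * (d t)\<^sup>2 / (2 * \<sigma>\<^sup>2) + (s * (d t - q t) / \<sigma>)\<^sup>2 / 2))"
    unfolding chernoff_exponent_def using assms(1-3) by (rule nn_integral_exp_masked_gaussian_sum)
  also have "\<dots> \<le> ennreal (\<Prod>t\<in>I. exp (3 * \<gamma> * s\<^sup>2 * (q t)\<^sup>2 / \<sigma>\<^sup>2 - a * (d t)\<^sup>2))"
    using coordinate assms by (intro ennreal_leI prod_mono) auto
  also have "(\<Prod>t\<in>I. exp (3 * \<gamma> * s\<^sup>2 * (q t)\<^sup>2 / \<sigma>\<^sup>2 - a * (d t)\<^sup>2))
      = exp (3 * \<gamma> * s\<^sup>2 * (\<Sum>t\<in>I. (q t)\<^sup>2) / \<sigma>\<^sup>2 - a * (\<Sum>t\<in>I. (d t)\<^sup>2))"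
    using assms by (simp add: exp_sum[symmetric] sum_subtractf sum_distrib_left sum_divide_distrib)
  finally show ?thesis .
qed

section \<open>Quantization grids\<close>

lemma levels_eq_image: "levels lo hi \<theta> = (\<lambda>t. lo + real t * (hi - lo) / (real \<theta> - 1)) ` {..<\<theta>}"
  unfolding levels_def by auto

lemma finite_levels [simp]: "finite (levels lo hi \<theta>)"
  unfolding levels_eq_image by simp

lemma card_levels_le: "card (levels lo hi \<theta>) \<le> \<theta>"
  unfolding levels_eq_image by (metis card_image_le card_lessThan finite_lessThan)

lemma zero_in_levels: "0 < \<theta> \<Longrightarrow> 0 \<in> levels 0 h \<theta>"
  unfolding levels_def by force

definition round_down :: "nat \<Rightarrow> real \<Rightarrow> real \<Rightarrow> real" where
  "round_down \<theta> h x = real (nat \<lfloor>x * (real \<theta> - 1) / h\<rfloor>) * h / (real \<theta> - 1)"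

lemma round_down:
  assumes "2 \<le> \<theta>" "0 < h" "0 \<le> x" "x \<le> h"
  shows "round_down \<theta> h x \<in> levels 0 h \<theta>" "0 \<le> round_down \<theta> h x" "round_down \<theta> h x \<le> x"
    "x - round_down \<theta> h x \<le> h / (real \<theta> - 1)"
proof -
  define y where "y = x * (real \<theta> - 1) / h"
  have gap: "0 < real \<theta> - 1"
    using assms by simp
  have y_range: "0 \<le> y" "y \<le> real \<theta> - 1"
    unfolding y_def using assms gap by (simp_all add: divide_le_eq mult.commute mult_right_mono)
  then have "\<lfloor>y\<rfloor> \<le> int \<theta> - 1"
    by (metis floor_mono floor_of_int of_int_1 of_int_diff of_int_of_nat_eq)
  then have "nat \<lfloor>y\<rfloor> < \<theta>"
    using assms by linarith
  then show "round_down \<theta> h x \<in> levels 0 h \<theta>"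
    unfolding round_down_def levels_def y_def[symmetric] by auto
  have floor_y: "real (nat \<lfloor>y\<rfloor>) \<le> y" "y - 1 < real (nat \<lfloor>y\<rfloor>)"
    using y_range by linarith+
  have round_down_y: "round_down \<theta> h x = real (nat \<lfloor>y\<rfloor>) * (h / (real \<theta> - 1))"
    unfolding round_down_def y_def by simp
  have x_y: "x = y * (h / (real \<theta> - 1))"
    unfolding y_def using gap assms by simp
  show "0 \<le> round_down \<theta> h x"
    unfolding round_down_y using assms gap by simp
  show "round_down \<theta> h x \<le> x"
    unfolding round_down_y using floor_y assms gap by (subst x_y) (intro mult_right_mono, auto)
  have "(y - 1) * (h / (real \<theta> - 1)) \<le> real (nat \<lfloor>y\<rfloor>) * (h / (real \<theta> - 1))"
    using floor_y assms gap by (intro mult_right_mono) auto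
  moreover have "(y - 1) * (h / (real \<theta> - 1)) = x - h / (real \<theta> - 1)"
    by (subst x_y) (simp add: left_diff_distrib diff_divide_distrib)
  ultimately show "x - round_down \<theta> h x \<le> h / (real \<theta> - 1)"
    unfolding round_down_y by linarith
qed

lemma round_down_0 [simp]: "round_down \<theta> h 0 = 0"
  unfolding round_down_def by simp

lemma card_PiE_levels_le:
  assumes "finite E"
  shows "card (PiE E (\<lambda>_. levels lo hi \<theta>)) \<le> \<theta> ^ card E"
  using assms by (simp add: card_PiE power_mono card_levels_le)

lemma sum_levels_support_weight_le:
  assumes "0 \<le> w"
  shows "(\<Sum>x\<in>levels lo hi \<theta>. if x \<noteq> 0 then w else 1) \<le> 1 + real \<theta> * w"
proof -
  have "(\<Sum>x\<in>levels lo hi \<theta>. if x \<noteq> 0 then w else 1) \<le> (\<Sum>x\<in>levels lo hi \<theta>. w + (if x = 0 then 1 else 0))"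
    using assms by (intro sum_mono) auto
  also have "\<dots> = real (card (levels lo hi \<theta>)) * w + (if 0 \<in> levels lo hi \<theta> then 1 else 0)"
    by (simp add: sum.distrib)
  also have "\<dots> \<le> real \<theta> * w + 1"
    using assms card_levels_le[of lo hi \<theta>] by (intro add_mono mult_right_mono) auto
  finally show ?thesis
    by simp
qed

lemma sum_PiE_levels_exp_support_le:
  assumes "finite E" "0 \<le> \<mu>"
  shows "(\<Sum>g\<in>PiE E (\<lambda>_. levels lo hi \<theta>). exp (- \<mu> * real (card {e \<in> E. g e \<noteq> 0})))
          \<le> exp (real (card E) * real \<theta> * exp (- \<mu>))"
proof -
  define w where "w x = (if x \<noteq> 0 then exp (- \<mu>) else 1)" for x :: real
  have "exp (- \<mu> * real (card {e \<in> E. g e \<noteq> 0})) = (\<Prod>e\<in>E. w (g e))" for g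
  proof -
    have "(\<Prod>e\<in>E. w (g e)) = (\<Prod>e\<in>{e \<in> E. g e \<noteq> 0}. exp (- \<mu>))"
      unfolding w_def using assms(1) by (simp add: prod.If_cases Int_def)
    then show ?thesis
      by (simp add: exp_of_nat_mult[symmetric] mult.commute)
  qed
  then have "(\<Sum>g\<in>PiE E (\<lambda>_. levels lo hi \<theta>). exp (- \<mu> * real (card {e \<in> E. g e \<noteq> 0})))
      = (\<Sum>g\<in>PiE E (\<lambda>_. levels lo hi \<theta>). \<Prod>e\<in>E. w (g e))"
    by simp
  also have "\<dots> = (\<Prod>e\<in>E. \<Sum>x\<in>levels lo hi \<theta>. w x)"
    using assms(1) by (simp only: prod_sum_PiE finite_levels)
  also have "\<dots> \<le> (\<Prod>e\<in>E. exp (real \<theta> * exp (- \<mu>)))"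
  proof (intro prod_mono conjI)
    fix e
    show "0 \<le> (\<Sum>x\<in>levels lo hi \<theta>. w x)"
      unfolding w_def by (intro sum_nonneg) auto
    have "(\<Sum>x\<in>levels lo hi \<theta>. w x) \<le> 1 + real \<theta> * exp (- \<mu>)"
      unfolding w_def by (rule sum_levels_support_weight_le) simp
    also have "\<dots> \<le> exp (real \<theta> * exp (- \<mu>))"
      using exp_ge_add_one_self by (simp add: add.commute)
    finally show "(\<Sum>x\<in>levels lo hi \<theta>. w x) \<le> exp (real \<theta> * exp (- \<mu>))" .
  qed
  also have "\<dots> = exp (real (card E) * real \<theta> * exp (- \<mu>))"
    by (simp add: exp_of_nat_mult[symmetric] mult.assoc)
  finally show ?thesis .
qed

definition entry :: "tensor \<Rightarrow> idx \<Rightarrow> real" where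
  "entry X = (\<lambda>(i, j, k). X i j k)"

definition tensor_of :: "(idx \<Rightarrow> real) \<Rightarrow> tensor" where
  "tensor_of g = (\<lambda>i j k. g (i, j, k))"

lemma entry_apply [simp]: "entry X (i, j, k) = X i j k"
  by (simp add: entry_def)

lemma tensor_of_apply [simp]: "tensor_of g i j k = g (i, j, k)"
  by (simp add: tensor_of_def)

lemma frob_sq_nonneg: "0 \<le> frob_sq n1 n2 n3 X"
  unfolding frob_sq_def by (intro sum_nonneg) simp

lemma frob_sq_eq_sum_entry: "frob_sq n1 n2 n3 X = (\<Sum>t\<in>index_set n1 n2 n3. (entry X t)\<^sup>2)"
  unfolding frob_sq_def index_set_def by (auto simp: sum.cartesian_product intro!: sum.cong)

lemma l0norm_tensor_of:
  "l0norm r n2 n3 (tensor_of g) = card {e \<in> {..<r} \<times> {..<n2} \<times> {..<n3}. g e \<noteq> 0}"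
  unfolding l0norm_def by (rule arg_cong[where f = card]) auto

lemma tprod_cong:
  assumes "0 < n3" "\<And>l k. l < r \<Longrightarrow> k < n3 \<Longrightarrow> A i l k = A' i l k"
    "\<And>l q. l < r \<Longrightarrow> q < n3 \<Longrightarrow> B l j q = B' l j q"
  shows "tprod r n3 A B i j k = tprod r n3 A' B' i j k"
  unfolding tprod_def using assms by (intro sum.cong refl) auto

lemma tprod_rank_0 [simp]: "tprod 0 n3 A B = (\<lambda>i j k. 0)"
  by (simp add: tprod_def)

lemma pml_estimator_rank_0:
  assumes "is_pml_estimator n1 n2 n3 0 \<theta> b c \<sigma> lam est" "\<Omega> \<subseteq> index_set n1 n2 n3"
  shows "est \<Omega> Y = (\<lambda>i j k. 0)"
  using assms unfolding is_pml_estimator_def by auto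

lemma round_down_mult:
  assumes "2 \<le> \<theta>" "0 < b" "0 \<le> x" "x \<le> 1" "0 \<le> y" "y \<le> b"
  defines "p \<equiv> round_down \<theta> 1 x * round_down \<theta> b y"
  shows "0 \<le> p \<and> p \<le> x * y \<and> x * y - p \<le> 2 * b / (real \<theta> - 1)"
proof -
  define e where "e = 1 / (real \<theta> - 1)"
  note rx = round_down[OF assms(1) zero_less_one assms(3,4)]
  note ry = round_down[OF assms(1,2,5,6)]
  have "(x - round_down \<theta> 1 x) * y \<le> e * b" "round_down \<theta> 1 x * (y - round_down \<theta> b y) \<le> 1 * (b * e)"
    using rx ry assms by (intro mult_mono; simp add: e_def)+
  moreover have "x * y - p = (x - round_down \<theta> 1 x) * y + round_down \<theta> 1 x * (y - round_down \<theta> b y)"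
    unfolding p_def by (simp add: algebra_simps)
  moreover have "0 \<le> p" "p \<le> x * y"
    unfolding p_def using rx ry assms by (auto intro: mult_mono)
  ultimately show ?thesis
    by (simp add: e_def)
qed

(* Rounding down rather than to the nearest level keeps the rounded t-product below the true
   one, so that it stays in [0, c] and the rounded factors are feasible. *)
lemma tprod_round_down:
  assumes "2 \<le> \<theta>" "0 < b" "0 < n3"
    and As: "\<forall>i<n1. \<forall>l<r. \<forall>k<n3. 0 \<le> As i l k \<and> As i l k \<le> 1"
    and Bs: "\<forall>l<r. \<forall>j<n2. \<forall>k<n3. 0 \<le> Bs l j k \<and> Bs l j k \<le> b"
  defines "AQ \<equiv> \<lambda>i l k. round_down \<theta> 1 (As i l k)"
    and "BQ \<equiv> \<lambda>l j k. round_down \<theta> b (Bs l j k)"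
  shows "AQ \<in> LSet n1 r n3 \<theta>" "BQ \<in> DSet r n2 n3 \<theta> b" "l0norm r n2 n3 BQ \<le> l0norm r n2 n3 Bs"
    and "\<And>i j k. i < n1 \<Longrightarrow> j < n2 \<Longrightarrow> k < n3 \<Longrightarrow>
      0 \<le> tprod r n3 AQ BQ i j k \<and> tprod r n3 AQ BQ i j k \<le> tprod r n3 As Bs i j k \<and>
      tprod r n3 As Bs i j k - tprod r n3 AQ BQ i j k \<le> 2 * real r * real n3 * b / (real \<theta> - 1)"
proof -
  note A = round_down[OF assms(1) zero_less_one, of "As i l k" for i l k]
  note B = round_down[OF assms(1,2), of "Bs l j k" for l j k]
  show "AQ \<in> LSet n1 r n3 \<theta>"
    unfolding LSet_def AQ_def using A As by auto
  show "BQ \<in> DSet r n2 n3 \<theta> b"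
    unfolding DSet_def BQ_def using B Bs by auto
  show "l0norm r n2 n3 BQ \<le> l0norm r n2 n3 Bs"
    unfolding l0norm_def BQ_def
    by (intro card_mono) (auto intro: finite_subset[of _ "{..<r} \<times> {..<n2} \<times> {..<n3}"])
  fix i j k assume ijk: "i < n1" "j < n2" "k < n3"
  define e where "e = 1 / (real \<theta> - 1)"
  define k' where "k' q = (k + n3 - q) mod n3" for q
  have summand: "0 \<le> AQ i l (k' q) * BQ l j q \<and> AQ i l (k' q) * BQ l j q \<le> As i l (k' q) * Bs l j q \<and>
      As i l (k' q) * Bs l j q - AQ i l (k' q) * BQ l j q \<le> 2 * b * e" if "l < r" "q < n3" for l q
    unfolding AQ_def BQ_def e_def k'_def
    using round_down_mult[OF assms(1,2), of "As i l ((k + n3 - q) mod n3)" "Bs l j q"] As Bs ijk that \<open>0 < n3\<close>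
    by simp
  have "tprod r n3 As Bs i j k - tprod r n3 AQ BQ i j k
      = (\<Sum>q<n3. \<Sum>l<r. As i l (k' q) * Bs l j q - AQ i l (k' q) * BQ l j q)"
    unfolding tprod_def k'_def by (simp add: sum_subtractf)
  also have "\<dots> \<le> real n3 * (real r * (2 * b * e))"
    using summand by (intro sum_bounded_above[of "{..<n3}", simplified] sum_bounded_above[of "{..<r}", simplified]) simp
  also have "\<dots> = 2 * real r * real n3 * b / (real \<theta> - 1)"
    by (simp add: e_def)
  finally have "tprod r n3 As Bs i j k - tprod r n3 AQ BQ i j k \<le> 2 * real r * real n3 * b / (real \<theta> - 1)" .
  moreover have "0 \<le> tprod r n3 AQ BQ i j k" "tprod r n3 AQ BQ i j k \<le> tprod r n3 As Bs i j k"
    unfolding tprod_def k'_def[symmetric] using summand by (auto intro!: sum_nonneg sum_mono)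
  ultimately show "0 \<le> tprod r n3 AQ BQ i j k \<and> tprod r n3 AQ BQ i j k \<le> tprod r n3 As Bs i j k \<and>
      tprod r n3 As Bs i j k - tprod r n3 AQ BQ i j k \<le> 2 * real r * real n3 * b / (real \<theta> - 1)"
    by blast
qed

section \<open>Choice of the parameters\<close>

lemma quant_levels_bounds:
  assumes "0 \<le> \<beta>" "1 \<le> max n1 n2"
  shows "real (max n1 n2) powr \<beta> \<le> real (quant_levels \<beta> n1 n2)"
    and "real (quant_levels \<beta> n1 n2) \<le> 2 * real (max n1 n2) powr \<beta>"
proof -
  define x where "x = \<beta> * log 2 (real (max n1 n2))"
  have "0 \<le> x"
    unfolding x_def using assms by simp
  have levels_eq: "real (quant_levels \<beta> n1 n2) = 2 powr real (nat \<lceil>x\<rceil>)"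
    unfolding quant_levels_def x_def by (simp add: powr_realpow)
  have n_eq: "real (max n1 n2) powr \<beta> = 2 powr x"
  proof -
    have "real (max n1 n2) = 2 powr log 2 (real (max n1 n2))"
      using assms by simp
    then show ?thesis
      unfolding x_def by (metis powr_powr mult.commute)
  qed
  have "x \<le> real (nat \<lceil>x\<rceil>)" "real (nat \<lceil>x\<rceil>) \<le> x + 1"
    using \<open>0 \<le> x\<close> by linarith+
  then show "real (max n1 n2) powr \<beta> \<le> real (quant_levels \<beta> n1 n2)"
    and "real (quant_levels \<beta> n1 n2) \<le> 2 * real (max n1 n2) powr \<beta>"
    unfolding levels_eq n_eq by (auto simp: powr_add intro: order_trans[OF powr_mono])
qed

lemma two_le_quant_levels:
  assumes "1 \<le> \<beta>" "2 \<le> max n1 n2"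
  shows "2 \<le> quant_levels \<beta> n1 n2"
proof -
  have "2 \<le> real (max n1 n2) powr 1"
    using assms by simp
  also have "\<dots> \<le> real (max n1 n2) powr \<beta>"
    using assms by (intro powr_mono) auto
  also have "\<dots> \<le> real (quant_levels \<beta> n1 n2)"
    using assms by (intro quant_levels_bounds) auto
  finally show ?thesis
    by simp
qed

lemma quantization_error_le:
  fixes b c \<beta> n :: real
  assumes "1 \<le> r" "1 \<le> n3" "0 < b" "0 < c" "1 < n" "2 \<le> \<theta>"
    and \<beta>: "1 + ln (3 * real r * real n3 powr 1.5 * b / c) / ln n \<le> \<beta>" and \<theta>: "n powr \<beta> \<le> real \<theta>"
  shows "2 * real r * real n3 * b / (real \<theta> - 1) \<le> 4 * c / (3 * sqrt (real n3) * n)"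
proof -
  define x where "x = 3 * real r * real n3 powr 1.5 * b / c"
  have x_pos: "0 < x"
    unfolding x_def using assms by simp
  have "ln x \<le> (\<beta> - 1) * ln n"
    using \<beta> \<open>1 < n\<close> unfolding x_def by (simp add: field_simps)
  then have "x \<le> exp ((\<beta> - 1) * ln n)"
    using x_pos by (metis exp_gt_zero ln_exp ln_le_cancel_iff)
  then have "x \<le> n powr (\<beta> - 1)"
    using \<open>1 < n\<close> by (simp add: powr_def)
  then have "x * n \<le> real \<theta>"
    using \<theta> \<open>1 < n\<close> by (simp add: powr_diff le_divide_eq)
  have "2 * real r * real n3 * b / (real \<theta> - 1) \<le> 4 * real r * real n3 * b / real \<theta>"
    using assms by (simp add: field_simps)
  also have "\<dots> \<le> 4 * real r * real n3 * b / (x * n)"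
    using \<open>x * n \<le> real \<theta>\<close> x_pos assms by (intro divide_left_mono) auto
  also have "\<dots> = 4 * c / (3 * sqrt (real n3) * n)"
  proof -
    have "real n3 powr 1.5 = real n3 powr (1 + 1 / 2)"
      by simp
    also have "\<dots> = real n3 * sqrt (real n3)"
      using assms by (subst powr_add) (simp add: powr_half_sqrt)
    finally have "real n3 powr 1.5 = real n3 * sqrt (real n3)" .
    then show ?thesis
      unfolding x_def using assms by (simp add: field_simps real_sqrt_mult_self)
  qed
  finally show ?thesis .
qed

lemma chernoff_scale_bounds:
  fixes \<sigma> c \<beta> L :: real
  assumes \<sigma>: "0 < \<sigma>" and c: "0 < c"
  defines "s \<equiv> 3 * \<sigma>\<^sup>2 / (2 * (3 * \<sigma>\<^sup>2 + c\<^sup>2))"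
  shows "0 < s" "s \<le> 1 / 2" "s / \<sigma>\<^sup>2 \<le> 3 / (2 * c\<^sup>2)" "s\<^sup>2 / \<sigma>\<^sup>2 \<le> 3 / (4 * c\<^sup>2)"
    and "c\<^sup>2 / (1 - exp (- (s * c\<^sup>2 / (8 * \<sigma>\<^sup>2)))) \<le> 16 * \<sigma>\<^sup>2 + 7 * c\<^sup>2"
    and "s * (4 * (\<beta> + 2) * (1 + 2 * (c\<^sup>2 / (2 * \<sigma>\<^sup>2)) / 3) * L) = 2 * (\<beta> + 2) * L"
proof -
  define D where "D = 3 * \<sigma>\<^sup>2 + c\<^sup>2"
  have denom: "0 < 3 * \<sigma>\<^sup>2 + c\<^sup>2"
    using \<sigma> c by (simp add: add_pos_pos)
  have "1 + 2 * (c\<^sup>2 / (2 * \<sigma>\<^sup>2)) / 3 = D / (3 * \<sigma>\<^sup>2)"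
    unfolding D_def using \<sigma> by (simp add: field_simps)
  then have half: "s * (1 + 2 * (c\<^sup>2 / (2 * \<sigma>\<^sup>2)) / 3) = 1 / 2"
    unfolding s_def D_def[symmetric] using \<sigma> denom D_def by simp
  have "s * (4 * (\<beta> + 2) * (1 + 2 * (c\<^sup>2 / (2 * \<sigma>\<^sup>2)) / 3) * L)
      = 4 * (\<beta> + 2) * L * (s * (1 + 2 * (c\<^sup>2 / (2 * \<sigma>\<^sup>2)) / 3))"
    by (simp only: ac_simps)
  then show "s * (4 * (\<beta> + 2) * (1 + 2 * (c\<^sup>2 / (2 * \<sigma>\<^sup>2)) / 3) * L) = 2 * (\<beta> + 2) * L"
    unfolding half by (simp add: algebra_simps)
  show s_pos: "0 < s" and s_half: "s \<le> 1 / 2"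
    unfolding s_def using \<sigma> c denom by (simp_all add: field_simps)
  have "s / \<sigma>\<^sup>2 = 3 / (2 * (3 * \<sigma>\<^sup>2 + c\<^sup>2))"
    unfolding s_def using \<sigma> by simp
  also have "\<dots> \<le> 3 / (2 * c\<^sup>2)"
    using c denom by (intro divide_left_mono) (auto intro!: mult_pos_pos)
  finally show s_\<sigma>: "s / \<sigma>\<^sup>2 \<le> 3 / (2 * c\<^sup>2)" .
  have "s\<^sup>2 / \<sigma>\<^sup>2 = s * (s / \<sigma>\<^sup>2)"
    by (simp add: power2_eq_square)
  also have "\<dots> \<le> 1 / 2 * (3 / (2 * c\<^sup>2))"
    using s_pos s_half s_\<sigma> by (intro mult_mono) auto
  finally show "s\<^sup>2 / \<sigma>\<^sup>2 \<le> 3 / (4 * c\<^sup>2)"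
    by simp
  define U where "U = s * c\<^sup>2 / (8 * \<sigma>\<^sup>2)"
  have U_pos: "0 < U"
    unfolding U_def using s_pos \<sigma> c by simp
  have "U / (1 + U) \<le> 1 - exp (- U)"
    using exp_ge_add_one_self[of U] U_pos by (simp add: exp_minus field_simps)
  then have "c\<^sup>2 / (1 - exp (- U)) \<le> c\<^sup>2 / (U / (1 + U))"
    using U_pos \<sigma> c by (intro divide_left_mono) auto
  also have "\<dots> = c\<^sup>2 + c\<^sup>2 / U"
    using U_pos by (simp add: field_simps)
  also have "c\<^sup>2 / U = 16 * \<sigma>\<^sup>2 + 16 / 3 * c\<^sup>2"
    unfolding U_def s_def using \<sigma> c denom by (simp add: field_simps power2_eq_square)
  finally show "c\<^sup>2 / (1 - exp (- (s * c\<^sup>2 / (8 * \<sigma>\<^sup>2)))) \<le> 16 * \<sigma>\<^sup>2 + 7 * c\<^sup>2"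
    unfolding U_def using zero_le_power2[of c] by linarith
qed

lemma grid_weight_le:
  fixes \<beta> n \<mu> :: real
  assumes "2 \<le> n" "real n2 \<le> n" "3 \<le> \<beta>" "real \<theta> \<le> 2 * n powr \<beta>" "\<mu> = 2 * (\<beta> + 2) * ln n"
  shows "real n2 * real \<theta> * exp (- \<mu>) \<le> 1"
proof -
  define L where "L = ln n"
  have "2 / 3 \<le> L"
    unfolding L_def using assms(1) ln2_ge_two_thirds ln_le_cancel_iff[of 2 n] by linarith
  have "real n2 * real \<theta> * exp (- \<mu>) \<le> exp L * (2 * exp (\<beta> * L)) * exp (- (2 * (\<beta> + 2) * L))"
    using assms unfolding L_def by (intro mult_mono) (auto simp: powr_def)
  also have "\<dots> = 2 * exp (- ((\<beta> + 3) * L))"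
    by (simp add: exp_add[symmetric] algebra_simps)
  also have "\<dots> \<le> 2 * exp (- 4)"
    using mult_mono[of 6 "\<beta> + 3" "2 / 3" L] assms \<open>2 / 3 \<le> L\<close> by simp
  also have "\<dots> \<le> 1"
    using exp_ge_add_one_self[of 4] by (simp add: exp_minus field_simps)
  finally show ?thesis .
qed

lemma comparator_terms_le:
  fixes s \<sigma> c \<gamma> Q :: real
  assumes "0 < s" "s / \<sigma>\<^sup>2 \<le> 3 / (2 * c\<^sup>2)" "s\<^sup>2 / \<sigma>\<^sup>2 \<le> 3 / (4 * c\<^sup>2)" "0 < c"
    and "0 \<le> \<gamma>" "0 \<le> Q" "\<gamma> * Q \<le> 16 * c\<^sup>2 / 9"
  shows "3 * \<gamma> * s\<^sup>2 * Q / \<sigma>\<^sup>2 \<le> 4" and "s * (\<gamma> * Q / (2 * \<sigma>\<^sup>2)) \<le> 4 / 3"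
proof -
  have "3 * \<gamma> * s\<^sup>2 * Q / \<sigma>\<^sup>2 = 3 * (s\<^sup>2 / \<sigma>\<^sup>2) * (\<gamma> * Q)"
    by simp
  also have "\<dots> \<le> 3 * (3 / (4 * c\<^sup>2)) * (16 * c\<^sup>2 / 9)"
    using assms by (intro mult_mono) auto
  finally show "3 * \<gamma> * s\<^sup>2 * Q / \<sigma>\<^sup>2 \<le> 4"
    using assms by simp
  have "s * (\<gamma> * Q / (2 * \<sigma>\<^sup>2)) = 1 / 2 * (s / \<sigma>\<^sup>2) * (\<gamma> * Q)"
    by simp
  also have "\<dots> \<le> 1 / 2 * (3 / (2 * c\<^sup>2)) * (16 * c\<^sup>2 / 9)"
    using assms by (intro mult_mono) auto
  finally show "s * (\<gamma> * Q / (2 * \<sigma>\<^sup>2)) \<le> 4 / 3"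
    using assms by simp
qed

lemma log_partition_le:
  fixes n1 n2 n3 r \<theta> l0 :: nat and \<beta> s lam \<gamma> Q \<sigma> c :: real
  defines "n \<equiv> real (max n1 n2)" and "K \<equiv> real r * real n1 * real n3"
  assumes n: "2 \<le> n1" "2 \<le> n2" "2 \<le> n3" "1 \<le> r" and \<beta>: "3 \<le> \<beta>"
    and \<theta>: "1 \<le> \<theta>" "real \<theta> \<le> 2 * n powr \<beta>"
    and s: "0 < s" "s / \<sigma>\<^sup>2 \<le> 3 / (2 * c\<^sup>2)" "s\<^sup>2 / \<sigma>\<^sup>2 \<le> 3 / (4 * c\<^sup>2)" and slam: "s * lam = 2 * (\<beta> + 2) * ln n"
    and \<sigma>: "0 < \<sigma>" and c: "0 < c" and Q: "0 \<le> \<gamma>" "0 \<le> Q" "\<gamma> * Q \<le> 16 * c\<^sup>2 / 9"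
  shows "ln (real \<theta> ^ (n1 * r * n3) * exp (real (r * n2 * n3) * real \<theta> * exp (- (s * lam)) + 3 * \<gamma> * s\<^sup>2 * Q / \<sigma>\<^sup>2))
           + 1 + s * (\<gamma> * Q / (2 * \<sigma>\<^sup>2) + lam * real l0)
         \<le> 3 * (\<beta> + 2) * ln n * (K + real l0)"
proof -
  define L where "L = ln n"
  have n_ge: "2 \<le> n" "real n1 \<le> n" "real n2 \<le> n"
    unfolding n_def using n by auto
  have L: "ln 2 \<le> L" "2 / 3 \<le> L"
    unfolding L_def using n_ge ln2_ge_two_thirds ln_le_cancel_iff[of 2 n] by linarith+
  have K: "4 \<le> K"
    unfolding K_def using n mult_mono[of 2 "real r * real n1" 2 "real n3"] mult_mono[of 1 "real r" 2 "real n1"]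
    by simp
  have ln_\<theta>: "ln (real \<theta>) \<le> (\<beta> + 1) * L"
  proof -
    have "ln (real \<theta>) \<le> ln (2 * n powr \<beta>)"
      using \<theta> n_ge by simp
    also have "\<dots> = ln 2 + \<beta> * L"
      unfolding L_def using n_ge by (simp add: ln_mult ln_powr)
    finally show ?thesis
      using L by (simp add: algebra_simps)
  qed
  have "real n2 * real \<theta> * exp (- (s * lam)) \<le> 1"
    using n_ge \<beta> \<theta> slam by (intro grid_weight_le) auto
  then have "real r * real n3 * (real n2 * real \<theta> * exp (- (s * lam))) \<le> real r * real n3 * (real n1 / 2)"
    using n by (intro mult_left_mono) auto
  then have weight: "real (r * n2 * n3) * real \<theta> * exp (- (s * lam)) \<le> K / 2"
    unfolding K_def by (simp add: algebra_simps)
  note noise = comparator_terms_le[OF s c Q]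
  have "ln (real \<theta> ^ (n1 * r * n3) * exp (real (r * n2 * n3) * real \<theta> * exp (- (s * lam)) + 3 * \<gamma> * s\<^sup>2 * Q / \<sigma>\<^sup>2))
      + 1 + s * (\<gamma> * Q / (2 * \<sigma>\<^sup>2) + lam * real l0)
      = K * ln (real \<theta>) + real (r * n2 * n3) * real \<theta> * exp (- (s * lam)) + 3 * \<gamma> * s\<^sup>2 * Q / \<sigma>\<^sup>2
        + 1 + s * (\<gamma> * Q / (2 * \<sigma>\<^sup>2)) + 2 * (\<beta> + 2) * L * real l0"
    unfolding K_def using \<theta> slam by (simp add: ln_mult ln_realpow distrib_left L_def mult.assoc[symmetric])
  also have "\<dots> \<le> K * ((\<beta> + 1) * L) + 4 * (K * L) + 2 * (\<beta> + 2) * L * real l0"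
  proof -
    have "K * ln (real \<theta>) \<le> K * ((\<beta> + 1) * L)"
      using ln_\<theta> K by (intro mult_left_mono) auto
    moreover have "K * (1 / 2) \<le> K * L" "4 * (2 / 3) \<le> K * L"
      using K L by (intro mult_left_mono mult_mono; simp)+
    ultimately show ?thesis
      using weight noise by linarith
  qed
  also have "\<dots> \<le> 3 * (\<beta> + 2) * L * (K + real l0)"
  proof -
    have "0 \<le> K * L * (2 * \<beta> + 1) + (\<beta> + 2) * L * real l0"
      using K L \<beta> by (intro add_nonneg_nonneg mult_nonneg_nonneg) auto
    moreover have "K * ((\<beta> + 1) * L) + 4 * (K * L) + 2 * (\<beta> + 2) * L * real l0
        + (K * L * (2 * \<beta> + 1) + (\<beta> + 2) * L * real l0) = 3 * (\<beta> + 2) * L * (K + real l0)"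
      by (simp add: algebra_simps)
    ultimately show ?thesis
      by linarith
  qed
  finally show ?thesis
    unfolding L_def .
qed

lemma risk_constant_le:
  fixes B C \<beta> L K l0 \<sigma> c :: real and m :: nat
  assumes "B \<le> 3 * (\<beta> + 2) * L * (K + l0)" "0 \<le> C" "C \<le> 16 * \<sigma>\<^sup>2 + 7 * c\<^sup>2"
    and "0 \<le> \<beta> + 2" "0 \<le> L" "0 \<le> K + l0" "0 < m"
  shows "B * C / real m \<le> 16 * (3 * \<sigma>\<^sup>2 + 2 * c\<^sup>2) * (\<beta> + 2) * ((K + l0) / real m) * L"
proof -
  have "B * C \<le> 3 * (\<beta> + 2) * L * (K + l0) * (16 * \<sigma>\<^sup>2 + 7 * c\<^sup>2)"
    using assms by (intro mult_mono) auto
  also have "\<dots> = (\<beta> + 2) * L * (K + l0) * (3 * (16 * \<sigma>\<^sup>2 + 7 * c\<^sup>2))"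
    by (simp only: ac_simps)
  also have "\<dots> \<le> (\<beta> + 2) * L * (K + l0) * (16 * (3 * \<sigma>\<^sup>2 + 2 * c\<^sup>2))"
    using assms by (intro mult_left_mono) auto
  finally show ?thesis
    using assms(7) by (simp add: divide_right_mono field_simps)
qed

section \<open>The penalized maximum likelihood estimator\<close>

locale tensor_completion =
  fixes n1 n2 n3 r \<theta> :: nat and b c \<sigma> :: real and Xs :: tensor
  assumes n3_pos: "0 < n3" and theta_pos: "0 < \<theta>" and c_pos: "0 < c" and sigma_pos: "0 < \<sigma>"
    and Xs_range: "\<And>i j k. i < n1 \<Longrightarrow> j < n2 \<Longrightarrow> k < n3 \<Longrightarrow> 0 \<le> Xs i j k \<and> Xs i j k \<le> c"
begin

abbreviation I :: "idx set" where
  "I \<equiv> index_set n1 n2 n3"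

definition dev :: "tensor \<Rightarrow> idx \<Rightarrow> real" where
  "dev X t = entry X t - entry Xs t"

lemma finite_I: "finite I"
  by (simp add: index_set_def)

lemma frob_sq_diff_eq_sum_dev:
  "frob_sq n1 n2 n3 (\<lambda>i j k. X i j k - Xs i j k) = (\<Sum>t\<in>I. (dev X t)\<^sup>2)"
  unfolding frob_sq_eq_sum_entry dev_def by (intro sum.cong) auto

lemma objective_eq_misfit:
  "objective r n2 n3 \<sigma> lam (Omega_of n1 n2 n3 \<omega>) (Y_of n1 n2 n3 \<sigma> Xs \<omega>) A B
     = real (card (Omega_of n1 n2 n3 \<omega>)) * ln (sqrt (2 * pi * \<sigma>\<^sup>2))
       + misfit \<sigma> I (dev (tprod r n3 A B)) \<omega> + lam * real (l0norm r n2 n3 B)"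
proof -
  have "- ln (normal_density (X i j k) \<sigma> y) = ln (sqrt (2 * pi * \<sigma>\<^sup>2)) + (y - X i j k)\<^sup>2 / (2 * \<sigma>\<^sup>2)"
    for X :: tensor and i j k y
    using sigma_pos by (simp add: normal_density_def ln_div)
  then have "neg_loglik \<sigma> (Omega_of n1 n2 n3 \<omega>) X (Y_of n1 n2 n3 \<sigma> Xs \<omega>)
      = (\<Sum>t\<in>Omega_of n1 n2 n3 \<omega>. ln (sqrt (2 * pi * \<sigma>\<^sup>2)) + (\<sigma> * snd (\<omega> t) - dev X t)\<^sup>2 / (2 * \<sigma>\<^sup>2))"
    for X
    unfolding neg_loglik_def Y_of_def dev_def
    by (intro sum.cong refl) (auto simp: power2_commute algebra_simps)
  moreover have "(\<Sum>t\<in>Omega_of n1 n2 n3 \<omega>. f t) = (\<Sum>t\<in>I. if fst (\<omega> t) then f t else 0)" for f :: "idx \<Rightarrow> real"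
    unfolding Omega_of_def using finite_I by (rule sum.inter_filter)
  ultimately show ?thesis
    unfolding objective_def misfit_def by (simp add: sum.distrib)
qed

definition factor_grid :: "((idx \<Rightarrow> real) \<times> (idx \<Rightarrow> real)) set" where
  "factor_grid = PiE ({..<n1} \<times> {..<r} \<times> {..<n3}) (\<lambda>_. levels 0 1 \<theta>)
                 \<times> PiE ({..<r} \<times> {..<n2} \<times> {..<n3}) (\<lambda>_. levels 0 b \<theta>)"

definition grid_tensor :: "(idx \<Rightarrow> real) \<times> (idx \<Rightarrow> real) \<Rightarrow> tensor" where
  "grid_tensor P = tprod r n3 (tensor_of (fst P)) (tensor_of (snd P))"

definition grid_support :: "(idx \<Rightarrow> real) \<times> (idx \<Rightarrow> real) \<Rightarrow> nat" where
  "grid_support P = l0norm r n2 n3 (tensor_of (snd P))"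

definition candidates :: "((idx \<Rightarrow> real) \<times> (idx \<Rightarrow> real)) set" where
  "candidates = {P \<in> factor_grid. \<forall>t\<in>I. \<bar>dev (grid_tensor P) t\<bar> \<le> c}"

lemma finite_candidates: "finite candidates"
  unfolding candidates_def factor_grid_def by (simp add: finite_PiE)

lemma feasible_grid_representative:
  assumes "feasible n1 n2 n3 r \<theta> b c A B"
  obtains P where "P \<in> candidates" "\<And>t. t \<in> I \<Longrightarrow> dev (grid_tensor P) t = dev (tprod r n3 A B) t"
    "grid_support P = l0norm r n2 n3 B"
proof
  define P where "P = (restrict (entry A) ({..<n1} \<times> {..<r} \<times> {..<n3}),
                       restrict (entry B) ({..<r} \<times> {..<n2} \<times> {..<n3}))"
  have same_tprod: "tprod r n3 (tensor_of (fst P)) (tensor_of (snd P)) i j k = tprod r n3 A B i j k"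
    if "i < n1" "j < n2" for i j k
    using n3_pos that by (intro tprod_cong) (auto simp: P_def)
  show "grid_support P = l0norm r n2 n3 B"
    unfolding grid_support_def l0norm_def P_def by (rule arg_cong[where f = card]) auto
  show same_dev: "dev (grid_tensor P) t = dev (tprod r n3 A B) t" if "t \<in> I" for t
    using that same_tprod unfolding dev_def grid_tensor_def index_set_def by auto
  have "P \<in> factor_grid"
    using assms theta_pos zero_in_levels[of \<theta> b]
    unfolding feasible_def LSet_def DSet_def factor_grid_def P_def by (auto simp: PiE_iff) metis
  moreover have "\<bar>dev (tprod r n3 A B) t\<bar> \<le> c" if "t \<in> I" for t
    using that assms Xs_range unfolding feasible_def dev_def index_set_def by fastforce
  ultimately show "P \<in> candidates"
    unfolding candidates_def using same_dev by simp
qed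

lemma sum_candidates_exp_support_le:
  assumes "0 \<le> \<mu>"
  shows "(\<Sum>P\<in>candidates. exp (- \<mu> * real (grid_support P)))
           \<le> real \<theta> ^ (n1 * r * n3) * exp (real (r * n2 * n3) * real \<theta> * exp (- \<mu>))"
proof -
  define EA where "EA = {..<n1} \<times> {..<r} \<times> {..<n3}"
  define EB where "EB = {..<r} \<times> {..<n2} \<times> {..<n3}"
  have "(\<Sum>P\<in>candidates. exp (- \<mu> * real (grid_support P)))
      \<le> (\<Sum>P\<in>factor_grid. exp (- \<mu> * real (grid_support P)))"
    unfolding candidates_def factor_grid_def by (intro sum_mono2) (auto simp: finite_PiE)
  also have "\<dots> = real (card (PiE EA (\<lambda>_. levels 0 1 \<theta>)))
      * (\<Sum>g\<in>PiE EB (\<lambda>_. levels 0 b \<theta>). exp (- \<mu> * real (card {e \<in> EB. g e \<noteq> 0})))"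
    unfolding factor_grid_def grid_support_def l0norm_tensor_of EA_def[symmetric] EB_def[symmetric]
    by (simp add: sum.cartesian_product')
  also have "\<dots> \<le> real \<theta> ^ (n1 * r * n3) * exp (real (r * n2 * n3) * real \<theta> * exp (- \<mu>))"
  proof (intro mult_mono)
    show "real (card (PiE EA (\<lambda>_. levels 0 1 \<theta>))) \<le> real \<theta> ^ (n1 * r * n3)"
      using card_PiE_levels_le[of EA 0 1 \<theta>] unfolding EA_def
      by (metis card_cartesian_product card_lessThan finite_cartesian_product finite_lessThan mult.assoc of_nat_le_iff of_nat_power)
    show "(\<Sum>g\<in>PiE EB (\<lambda>_. levels 0 b \<theta>). exp (- \<mu> * real (card {e \<in> EB. g e \<noteq> 0})))
        \<le> exp (real (r * n2 * n3) * real \<theta> * exp (- \<mu>))"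
      using sum_PiE_levels_exp_support_le[of EB \<mu> 0 b \<theta>] assms unfolding EB_def by (simp add: card_cartesian_product mult.assoc)
  qed (auto intro: sum_nonneg)
  finally show ?thesis .
qed

(* By chernoff_exponent_eq_misfit, this is a times the squared error of P plus s times the gain
   in penalized log-likelihood of P over the comparator q, up to a term that does not depend on P. *)
definition grid_exponent ::
  "real \<Rightarrow> real \<Rightarrow> real \<Rightarrow> (idx \<Rightarrow> real) \<Rightarrow> (idx \<Rightarrow> real) \<times> (idx \<Rightarrow> real) \<Rightarrow> (idx \<Rightarrow> bool \<times> real) \<Rightarrow> real" where
  "grid_exponent s lam a q P \<omega> = a * (\<Sum>t\<in>I. (dev (grid_tensor P) t)\<^sup>2) - s * lam * real (grid_support P)
     + chernoff_exponent \<sigma> s I (dev (grid_tensor P)) q \<omega>"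

lemma estimator_basic_inequality:
  assumes est: "is_pml_estimator n1 n2 n3 r \<theta> b c \<sigma> lam est"
    and comparator: "feasible n1 n2 n3 r \<theta> b c AQ BQ" and "0 \<le> s"
  defines "q \<equiv> dev (tprod r n3 AQ BQ)"
  obtains P where "P \<in> candidates"
    "a * (\<Sum>t\<in>I. (dev (est (Omega_of n1 n2 n3 \<omega>) (Y_of n1 n2 n3 \<sigma> Xs \<omega>)) t)\<^sup>2)
       \<le> grid_exponent s lam a q P \<omega>
         + s * ((\<Sum>t\<in>I. if fst (\<omega> t) then (q t)\<^sup>2 / (2 * \<sigma>\<^sup>2) else 0) + lam * real (l0norm r n2 n3 BQ))"
proof -
  have "Omega_of n1 n2 n3 \<omega> \<subseteq> I"
    unfolding Omega_of_def by auto
  then obtain A B where AB: "feasible n1 n2 n3 r \<theta> b c A B"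
    and est_eq: "est (Omega_of n1 n2 n3 \<omega>) (Y_of n1 n2 n3 \<sigma> Xs \<omega>) = tprod r n3 A B"
    and minimal: "objective r n2 n3 \<sigma> lam (Omega_of n1 n2 n3 \<omega>) (Y_of n1 n2 n3 \<sigma> Xs \<omega>) A B
                  \<le> objective r n2 n3 \<sigma> lam (Omega_of n1 n2 n3 \<omega>) (Y_of n1 n2 n3 \<sigma> Xs \<omega>) AQ BQ"
    using est comparator unfolding is_pml_estimator_def by blast
  obtain P where P: "P \<in> candidates" and same_dev: "\<And>t. t \<in> I \<Longrightarrow> dev (grid_tensor P) t = dev (tprod r n3 A B) t"
    and same_support: "grid_support P = l0norm r n2 n3 B"
    using feasible_grid_representative[OF AB] by blast
  have same_misfit: "misfit \<sigma> I (dev (grid_tensor P)) \<omega> = misfit \<sigma> I (dev (tprod r n3 A B)) \<omega>"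
    unfolding misfit_def using same_dev by (intro sum.cong) auto
  have "misfit \<sigma> I (dev (grid_tensor P)) \<omega> + lam * real (grid_support P)
      \<le> misfit \<sigma> I q \<omega> + lam * real (l0norm r n2 n3 BQ)"
    using minimal unfolding objective_eq_misfit same_misfit same_support q_def by simp
  then have "0 \<le> s * (misfit \<sigma> I q \<omega> + lam * real (l0norm r n2 n3 BQ)
                 - (misfit \<sigma> I (dev (grid_tensor P)) \<omega> + lam * real (grid_support P)))"
    using \<open>0 \<le> s\<close> by simp
  moreover have "(\<Sum>t\<in>I. (dev (est (Omega_of n1 n2 n3 \<omega>) (Y_of n1 n2 n3 \<sigma> Xs \<omega>)) t)\<^sup>2)
      = (\<Sum>t\<in>I. (dev (grid_tensor P) t)\<^sup>2)"
    unfolding est_eq using same_dev by (intro sum.cong) auto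
  ultimately show ?thesis
    using P that sigma_pos
    unfolding grid_exponent_def chernoff_exponent_eq_misfit[OF sigma_pos[THEN less_imp_neq, symmetric]]
    by (simp add: algebra_simps)
qed

lemma sum_candidates_exp_moment_le:
  assumes s: "0 < s" "s \<le> 1 / 2" and lam: "0 \<le> lam" and \<gamma>: "0 \<le> \<gamma>" "\<gamma> \<le> 1"
    and q: "\<And>t. t \<in> I \<Longrightarrow> 3 * s\<^sup>2 * (q t)\<^sup>2 \<le> 2 * \<sigma>\<^sup>2"
  defines "a \<equiv> \<gamma> * (1 - exp (- (s * c\<^sup>2 / (8 * \<sigma>\<^sup>2)))) / c\<^sup>2"
  shows "(\<Sum>P\<in>candidates. \<integral>\<^sup>+ \<omega>. ennreal (exp (grid_exponent s lam a q P \<omega>)) \<partial>PiM I (\<lambda>_. obs_noise \<gamma>))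
     \<le> ennreal (real \<theta> ^ (n1 * r * n3) * exp (real (r * n2 * n3) * real \<theta> * exp (- (s * lam))
                  + 3 * \<gamma> * s\<^sup>2 * (\<Sum>t\<in>I. (q t)\<^sup>2) / \<sigma>\<^sup>2))"
proof -
  define G where "G = 3 * \<gamma> * s\<^sup>2 * (\<Sum>t\<in>I. (q t)\<^sup>2) / \<sigma>\<^sup>2"
  have single: "(\<integral>\<^sup>+ \<omega>. ennreal (exp (grid_exponent s lam a q P \<omega>)) \<partial>PiM I (\<lambda>_. obs_noise \<gamma>))
      \<le> ennreal (exp (- (s * lam) * real (grid_support P)) * exp G)" if "P \<in> candidates" for P
  proof -
    define D where "D = (\<Sum>t\<in>I. (dev (grid_tensor P) t)\<^sup>2)"
    have "(\<integral>\<^sup>+ \<omega>. ennreal (exp (grid_exponent s lam a q P \<omega>)) \<partial>PiM I (\<lambda>_. obs_noise \<gamma>))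
        = ennreal (exp (a * D - s * lam * real (grid_support P)))
          * (\<integral>\<^sup>+ \<omega>. ennreal (exp (chernoff_exponent \<sigma> s I (dev (grid_tensor P)) q \<omega>)) \<partial>PiM I (\<lambda>_. obs_noise \<gamma>))"
      unfolding grid_exponent_def D_def
      by (subst nn_integral_cmult[symmetric]) (auto simp: exp_add ennreal_mult)
    also have "\<dots> \<le> ennreal (exp (a * D - s * lam * real (grid_support P))) * ennreal (exp (G - a * D))"
      using that s \<gamma> c_pos sigma_pos q
      unfolding G_def D_def a_def candidates_def
      by (intro mult_left_mono nn_integral_exp_chernoff_exponent_le finite_I) auto
    also have "\<dots> = ennreal (exp (- (s * lam) * real (grid_support P)) * exp G)"
      by (simp add: exp_add[symmetric] flip: ennreal_mult)
    finally show ?thesis .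
  qed
  have "(\<Sum>P\<in>candidates. \<integral>\<^sup>+ \<omega>. ennreal (exp (grid_exponent s lam a q P \<omega>)) \<partial>PiM I (\<lambda>_. obs_noise \<gamma>))
      \<le> (\<Sum>P\<in>candidates. ennreal (exp (- (s * lam) * real (grid_support P)) * exp G))"
    using single by (rule sum_mono)
  also have "\<dots> = ennreal ((\<Sum>P\<in>candidates. exp (- (s * lam) * real (grid_support P))) * exp G)"
    by (simp add: sum_ennreal sum_distrib_right)
  also have "\<dots> \<le> ennreal (real \<theta> ^ (n1 * r * n3) * exp (real (r * n2 * n3) * real \<theta> * exp (- (s * lam))) * exp G)"
    using s lam by (intro ennreal_leI mult_right_mono sum_candidates_exp_support_le) auto
  finally show ?thesis
    unfolding G_def by (simp add: exp_add mult.assoc)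
qed

lemma expected_sq_error_le:
  fixes s lam \<gamma> :: real and AQ BQ :: tensor and est :: "idx set \<Rightarrow> (idx \<Rightarrow> real) \<Rightarrow> tensor"
  defines "F \<equiv> \<lambda>\<omega>. frob_sq n1 n2 n3 (\<lambda>i j k. est (Omega_of n1 n2 n3 \<omega>) (Y_of n1 n2 n3 \<sigma> Xs \<omega>) i j k - Xs i j k)"
    and "a \<equiv> \<gamma> * (1 - exp (- (s * c\<^sup>2 / (8 * \<sigma>\<^sup>2)))) / c\<^sup>2"
    and "Q \<equiv> \<Sum>t\<in>I. (dev (tprod r n3 AQ BQ) t)\<^sup>2"
  defines "T \<equiv> real \<theta> ^ (n1 * r * n3) * exp (real (r * n2 * n3) * real \<theta> * exp (- (s * lam)) + 3 * \<gamma> * s\<^sup>2 * Q / \<sigma>\<^sup>2)"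
  assumes s: "0 < s" "s \<le> 1 / 2" and lam: "0 \<le> lam" and \<gamma>: "0 < \<gamma>" "\<gamma> \<le> 1"
    and comparator: "feasible n1 n2 n3 r \<theta> b c AQ BQ"
      "\<And>t. t \<in> I \<Longrightarrow> 3 * s\<^sup>2 * (dev (tprod r n3 AQ BQ) t)\<^sup>2 \<le> 2 * \<sigma>\<^sup>2"
    and est: "is_pml_estimator n1 n2 n3 r \<theta> b c \<sigma> lam est"
    and F_measurable: "F \<in> borel_measurable (sample_space n1 n2 n3 \<gamma>)"
  shows "(\<integral>\<^sup>+ \<omega>. ennreal (F \<omega>) \<partial>sample_space n1 n2 n3 \<gamma>)
           \<le> ennreal ((ln T + 1 + s * (\<gamma> * Q / (2 * \<sigma>\<^sup>2) + lam * real (l0norm r n2 n3 BQ))) / a)"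
proof -
  define q where "q = dev (tprod r n3 AQ BQ)"
  define h where "h \<omega> = s * ((\<Sum>t\<in>I. if fst (\<omega> t) then (q t)\<^sup>2 / (2 * \<sigma>\<^sup>2) else 0)
                               + lam * real (l0norm r n2 n3 BQ))" for \<omega> :: "idx \<Rightarrow> bool \<times> real"
  have M: "sample_space n1 n2 n3 \<gamma> = PiM I (\<lambda>_. obs_noise \<gamma>)"
    by (simp add: sample_space_def)
  have a_pos: "0 < a"
    unfolding a_def using \<gamma> s c_pos sigma_pos by simp
  have T_ge_1: "1 \<le> T"
    unfolding T_def Q_def using theta_pos \<gamma>
    by (intro mult_ge1_I) (auto intro!: add_nonneg_nonneg divide_nonneg_nonneg mult_nonneg_nonneg sum_nonneg)
  have Q_nonneg: "0 \<le> Q"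
    unfolding Q_def by (intro sum_nonneg) simp
  have h_nonneg: "0 \<le> h \<omega>" for \<omega>
    unfolding h_def using s lam by (auto intro!: mult_nonneg_nonneg add_nonneg_nonneg sum_nonneg)
  have "(\<integral>\<^sup>+ \<omega>. ennreal (a * F \<omega>) \<partial>sample_space n1 n2 n3 \<gamma>)
      \<le> ennreal (ln T + 1) + (\<integral>\<^sup>+ \<omega>. ennreal (h \<omega>) \<partial>PiM I (\<lambda>_. obs_noise \<gamma>))"
    unfolding M
  proof (rule nn_integral_le_via_exp_moments[where C = candidates and Z = "grid_exponent s lam a q"])
    show "prob_space (PiM I (\<lambda>_. obs_noise \<gamma>))"
      by (intro prob_space_PiM prob_space_obs_noise)
    show "(\<Sum>P\<in>candidates. \<integral>\<^sup>+ \<omega>. ennreal (exp (grid_exponent s lam a q P \<omega>)) \<partial>PiM I (\<lambda>_. obs_noise \<gamma>))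
        \<le> ennreal T"
      unfolding T_def Q_def q_def a_def using s lam \<gamma> comparator(2)
      by (intro sum_candidates_exp_moment_le) auto
    show "\<exists>P\<in>candidates. a * F \<omega> \<le> grid_exponent s lam a q P \<omega> + h \<omega>" for \<omega>
    proof -
      obtain P where "P \<in> candidates"
        "a * (\<Sum>t\<in>I. (dev (est (Omega_of n1 n2 n3 \<omega>) (Y_of n1 n2 n3 \<sigma> Xs \<omega>)) t)\<^sup>2)
           \<le> grid_exponent s lam a q P \<omega> + h \<omega>"
        using estimator_basic_inequality[OF est comparator(1) less_imp_le[OF s(1)], where a = a and \<omega> = \<omega>]
        unfolding h_def q_def by blast
      then show ?thesis
        unfolding F_def frob_sq_diff_eq_sum_dev by blast
    qed
    show "grid_exponent s lam a q P \<in> borel_measurable (PiM I (\<lambda>_. obs_noise \<gamma>))" for P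
      unfolding grid_exponent_def by measurable
    show "h \<in> borel_measurable (PiM I (\<lambda>_. obs_noise \<gamma>))"
      unfolding h_def by measurable
  qed (use finite_candidates T_ge_1 h_nonneg in auto)
  also have "(\<integral>\<^sup>+ \<omega>. ennreal (h \<omega>) \<partial>PiM I (\<lambda>_. obs_noise \<gamma>))
      = ennreal (s * (\<gamma> * Q / (2 * \<sigma>\<^sup>2) + lam * real (l0norm r n2 n3 BQ)))"
    unfolding h_def Q_def q_def using s lam \<gamma> finite_I
    by (subst nn_integral_masked_penalty) (auto simp: sum_divide_distrib[symmetric])
  also have "ennreal (ln T + 1) + \<dots> = ennreal (ln T + 1 + s * (\<gamma> * Q / (2 * \<sigma>\<^sup>2) + lam * real (l0norm r n2 n3 BQ)))"
    using T_ge_1 s lam \<gamma> Q_nonneg by (intro ennreal_plus[symmetric]) auto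
  finally show ?thesis
    using a_pos F_measurable by (intro nn_integral_le_divide) (auto simp: F_def frob_sq_nonneg)
qed

lemma rounded_comparator:
  fixes As Bs :: tensor and \<beta> :: real
  defines "n \<equiv> real (max n1 n2)"
  assumes Xs: "Xs = tprod r n3 As Bs" and \<theta>: "2 \<le> \<theta>" "n powr \<beta> \<le> real \<theta>"
    and "0 < b" "1 \<le> r" "2 \<le> n1"
    and \<beta>: "1 + ln (3 * real r * real n3 powr 1.5 * b / c) / ln n \<le> \<beta>"
    and As: "\<forall>i<n1. \<forall>l<r. \<forall>k<n3. 0 \<le> As i l k \<and> As i l k \<le> 1"
    and Bs: "\<forall>l<r. \<forall>j<n2. \<forall>k<n3. 0 \<le> Bs l j k \<and> Bs l j k \<le> b"
  obtains AQ BQ where "feasible n1 n2 n3 r \<theta> b c AQ BQ" "l0norm r n2 n3 BQ \<le> l0norm r n2 n3 Bs"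
    "\<And>t. t \<in> I \<Longrightarrow> (dev (tprod r n3 AQ BQ) t)\<^sup>2 \<le> 16 * c\<^sup>2 / (9 * real n3 * n\<^sup>2)"
proof
  define AQ where "AQ = (\<lambda>i l k. round_down \<theta> 1 (As i l k))"
  define BQ where "BQ = (\<lambda>l j k. round_down \<theta> b (Bs l j k))"
  note rounded = tprod_round_down[OF \<theta>(1) \<open>0 < b\<close> n3_pos As Bs, folded AQ_def BQ_def]
  show "feasible n1 n2 n3 r \<theta> b c AQ BQ"
    unfolding feasible_def using rounded Xs_range unfolding Xs by fastforce
  show "l0norm r n2 n3 BQ \<le> l0norm r n2 n3 Bs"
    by (fact rounded(3))
  fix t assume "t \<in> I"
  then have "\<bar>dev (tprod r n3 AQ BQ) t\<bar> \<le> 2 * real r * real n3 * b / (real \<theta> - 1)"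
    using rounded(4) unfolding dev_def by (auto simp: Xs index_set_def)
  also have "\<dots> \<le> 4 * c / (3 * sqrt (real n3) * n)"
    unfolding n_def using assms n3_pos c_pos by (intro quantization_error_le) auto
  finally have "(dev (tprod r n3 AQ BQ) t)\<^sup>2 \<le> (4 * c / (3 * sqrt (real n3) * n))\<^sup>2"
    by (metis abs_ge_zero power2_abs power_mono)
  also have "\<dots> = 16 * c\<^sup>2 / (9 * real n3 * n\<^sup>2)"
    using n3_pos by (simp add: power_divide power_mult_distrib)
  finally show "(dev (tprod r n3 AQ BQ) t)\<^sup>2 \<le> 16 * c\<^sup>2 / (9 * real n3 * n\<^sup>2)" .
qed

lemma comparator_entry_noise_le:
  fixes s :: real and XQ :: tensor
  defines "n \<equiv> real (max n1 n2)"
  assumes "2 \<le> n1" "2 \<le> n3" "s\<^sup>2 / \<sigma>\<^sup>2 \<le> 3 / (4 * c\<^sup>2)"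
    and "(dev XQ t)\<^sup>2 \<le> 16 * c\<^sup>2 / (9 * real n3 * n\<^sup>2)"
  shows "3 * s\<^sup>2 * (dev XQ t)\<^sup>2 \<le> 2 * \<sigma>\<^sup>2"
proof -
  have "2 \<le> n" "2 \<le> real n3 * n\<^sup>2"
    unfolding n_def using assms mult_mono[of 2 "real n3" 1 "n\<^sup>2"] by (auto simp: one_le_power n_def)
  have "3 * s\<^sup>2 * (dev XQ t)\<^sup>2 = 3 * \<sigma>\<^sup>2 * (s\<^sup>2 / \<sigma>\<^sup>2) * (dev XQ t)\<^sup>2"
    using sigma_pos by simp
  also have "\<dots> \<le> 3 * \<sigma>\<^sup>2 * (3 / (4 * c\<^sup>2)) * (16 * c\<^sup>2 / (9 * real n3 * n\<^sup>2))"
    using assms by (intro mult_mono) auto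
  also have "\<dots> = 4 * \<sigma>\<^sup>2 / (real n3 * n\<^sup>2)"
    using c_pos by (simp add: field_simps)
  also have "\<dots> \<le> 4 * \<sigma>\<^sup>2 / 2"
    using \<open>2 \<le> real n3 * n\<^sup>2\<close> by (intro divide_left_mono) auto
  finally show ?thesis
    by simp
qed

lemma comparator_sq_error_le:
  fixes XQ :: tensor and m :: nat
  defines "n \<equiv> real (max n1 n2)"
  assumes pos: "0 < n1" "0 < n2" and m: "m \<le> n1 * n2 * n3"
    and accurate: "\<And>t. t \<in> I \<Longrightarrow> (dev XQ t)\<^sup>2 \<le> 16 * c\<^sup>2 / (9 * real n3 * n\<^sup>2)"
  shows "real m / real (n1 * n2 * n3) * (\<Sum>t\<in>I. (dev XQ t)\<^sup>2) \<le> 16 * c\<^sup>2 / 9"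
proof -
  have "0 < n"
    unfolding n_def using pos by (simp add: less_max_iff_disj)
  have "(\<Sum>t\<in>I. (dev XQ t)\<^sup>2) \<le> real (card I) * (16 * c\<^sup>2 / (9 * real n3 * n\<^sup>2))"
    using accurate by (rule sum_bounded_above)
  also have "\<dots> = real n1 * real n2 / n\<^sup>2 * (16 * c\<^sup>2 / 9)"
    using n3_pos \<open>0 < n\<close> by (simp add: index_set_def card_cartesian_product field_simps)
  also have "\<dots> \<le> 1 * (16 * c\<^sup>2 / 9)"
  proof (intro mult_right_mono)
    have "real n1 * real n2 \<le> n\<^sup>2"
      unfolding n_def power2_eq_square by (intro mult_mono) auto
    then show "real n1 * real n2 / n\<^sup>2 \<le> 1"
      using \<open>0 < n\<close> by simp
  qed simp
  finally have Q_le: "(\<Sum>t\<in>I. (dev XQ t)\<^sup>2) \<le> 16 * c\<^sup>2 / 9"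
    by simp
  have \<gamma>_le: "real m / real (n1 * n2 * n3) \<le> 1"
  proof -
    have "real m \<le> real (n1 * n2 * n3)"
      using m by (simp only: of_nat_le_iff)
    moreover have "0 < real (n1 * n2 * n3)"
      using pos n3_pos by simp
    ultimately show ?thesis
      by simp
  qed
  have "real m / real (n1 * n2 * n3) * (\<Sum>t\<in>I. (dev XQ t)\<^sup>2) \<le> 1 * (16 * c\<^sup>2 / 9)"
    using \<gamma>_le Q_le by (intro mult_mono) (auto intro: sum_nonneg)
  then show ?thesis
    by simp
qed

lemma expected_sq_error_rate:
  fixes \<beta> :: real and m l0 :: nat and AQ BQ :: tensor and est :: "idx set \<Rightarrow> (idx \<Rightarrow> real) \<Rightarrow> tensor"
  defines "N \<equiv> real (n1 * n2 * n3)" and "n \<equiv> real (max n1 n2)"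
  defines "F \<equiv> \<lambda>\<omega>. frob_sq n1 n2 n3 (\<lambda>i j k. est (Omega_of n1 n2 n3 \<omega>) (Y_of n1 n2 n3 \<sigma> Xs \<omega>) i j k - Xs i j k)"
    and "\<gamma> \<equiv> real m / N" and "lam \<equiv> 4 * (\<beta> + 2) * (1 + 2 * (c\<^sup>2 / (2 * \<sigma>\<^sup>2)) / 3) * ln n"
  assumes n: "2 \<le> n1" "2 \<le> n2" "2 \<le> n3" and r: "1 \<le> r" and \<beta>: "3 \<le> \<beta>" and \<theta>: "\<theta> = quant_levels \<beta> n1 n2"
    and m: "1 \<le> m" "m \<le> n1 * n2 * n3"
    and comparator: "feasible n1 n2 n3 r \<theta> b c AQ BQ" "l0norm r n2 n3 BQ \<le> l0"
      "\<And>t. t \<in> I \<Longrightarrow> (dev (tprod r n3 AQ BQ) t)\<^sup>2 \<le> 16 * c\<^sup>2 / (9 * real n3 * n\<^sup>2)"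
    and est: "is_pml_estimator n1 n2 n3 r \<theta> b c \<sigma> lam est"
    and F_measurable: "F \<in> borel_measurable (sample_space n1 n2 n3 \<gamma>)"
  shows "(\<integral>\<^sup>+ \<omega>. ennreal (F \<omega> / N) \<partial>sample_space n1 n2 n3 \<gamma>)
           \<le> ennreal (16 * (3 * \<sigma>\<^sup>2 + 2 * c\<^sup>2) * (\<beta> + 2) * ((real r * real n1 * real n3 + real l0) / real m) * ln n)"
proof -
  define s where "s = 3 * \<sigma>\<^sup>2 / (2 * (3 * \<sigma>\<^sup>2 + c\<^sup>2))"
  define C where "C = c\<^sup>2 / (1 - exp (- (s * c\<^sup>2 / (8 * \<sigma>\<^sup>2))))"
  define Q where "Q = (\<Sum>t\<in>I. (dev (tprod r n3 AQ BQ) t)\<^sup>2)"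
  define B where "B = ln (real \<theta> ^ (n1 * r * n3) * exp (real (r * n2 * n3) * real \<theta> * exp (- (s * lam))
                        + 3 * \<gamma> * s\<^sup>2 * Q / \<sigma>\<^sup>2)) + 1 + s * (\<gamma> * Q / (2 * \<sigma>\<^sup>2) + lam * real (l0norm r n2 n3 BQ))"
  define K where "K = real r * real n1 * real n3"
  note s = chernoff_scale_bounds[OF sigma_pos c_pos, folded s_def C_def]
  have N_pos: "0 < N" and m_pos: "0 < real m" and \<gamma>: "0 < \<gamma>" "\<gamma> \<le> 1"
    using n m n3_pos unfolding \<gamma>_def N_def
    by (auto simp: divide_le_eq_1 simp flip: of_nat_mult intro!: divide_pos_pos)
  have n_ge: "2 \<le> n"
    unfolding n_def using n by simp
  have \<gamma>Q: "\<gamma> * Q \<le> 16 * c\<^sup>2 / 9"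
    unfolding \<gamma>_def N_def Q_def n_def using n m comparator(3) by (intro comparator_sq_error_le) (auto simp: n_def)
  have "(\<integral>\<^sup>+ \<omega>. ennreal (F \<omega>) \<partial>sample_space n1 n2 n3 \<gamma>)
      \<le> ennreal (B / (\<gamma> * (1 - exp (- (s * c\<^sup>2 / (8 * \<sigma>\<^sup>2)))) / c\<^sup>2))"
    unfolding F_def B_def Q_def
  proof (rule expected_sq_error_le)
    show "3 * s\<^sup>2 * (dev (tprod r n3 AQ BQ) t)\<^sup>2 \<le> 2 * \<sigma>\<^sup>2" if "t \<in> I" for t
      using n s comparator(3)[OF that] unfolding n_def by (intro comparator_entry_noise_le) auto
  qed (use s \<beta> n_ge \<gamma> comparator(1) est F_measurable in \<open>auto simp: lam_def F_def\<close>)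
  then have "(\<integral>\<^sup>+ \<omega>. ennreal (F \<omega> / N) \<partial>sample_space n1 n2 n3 \<gamma>)
      \<le> ennreal (B / (\<gamma> * (1 - exp (- (s * c\<^sup>2 / (8 * \<sigma>\<^sup>2)))) / c\<^sup>2) / N)"
    using N_pos F_measurable by (intro nn_integral_le_divide[where a = N]) (auto simp: F_def frob_sq_nonneg)
  also have "B / (\<gamma> * (1 - exp (- (s * c\<^sup>2 / (8 * \<sigma>\<^sup>2)))) / c\<^sup>2) / N = B * C / real m"
  proof -
    define E where "E = exp (- (s * c\<^sup>2 / (8 * \<sigma>\<^sup>2)))"
    have "1 - E \<noteq> 0"
      unfolding E_def using s sigma_pos c_pos by simp
    then have "B / (\<gamma> * (1 - E) / c\<^sup>2) / N = B * (c\<^sup>2 / (1 - E)) / (\<gamma> * N)"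
      using \<gamma> N_pos c_pos by (simp add: field_simps)
    also have "\<gamma> * N = real m"
      unfolding \<gamma>_def using N_pos by simp
    finally show ?thesis
      unfolding C_def E_def .
  qed
  also have "B * C / real m \<le> 16 * (3 * \<sigma>\<^sup>2 + 2 * c\<^sup>2) * (\<beta> + 2) * ((K + real l0) / real m) * ln n"
  proof -
    have "s * lam = 2 * (\<beta> + 2) * ln n"
      unfolding lam_def by (rule s(6))
    moreover have "real \<theta> \<le> 2 * n powr \<beta>" "1 \<le> \<theta>"
      unfolding \<theta> n_def using quant_levels_bounds(2)[of \<beta> n1 n2] \<beta> n by (auto simp: quant_levels_def)
    moreover have "0 \<le> Q"
      unfolding Q_def by (intro sum_nonneg) simp
    ultimately have "B \<le> 3 * (\<beta> + 2) * ln n * (K + real (l0norm r n2 n3 BQ))"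
      unfolding B_def K_def n_def using n r \<beta> s \<gamma> \<gamma>Q sigma_pos c_pos by (intro log_partition_le) auto
    also have "\<dots> \<le> 3 * (\<beta> + 2) * ln n * (K + real l0)"
      using comparator(2) \<beta> n_ge by (intro mult_left_mono) auto
    finally show ?thesis
      using s m_pos \<beta> n_ge sigma_pos c_pos unfolding C_def K_def
      by (intro risk_constant_le) (auto intro!: divide_nonneg_pos)
  qed
  finally show ?thesis
    unfolding K_def by (simp add: ennreal_leI)
qed

end

theorem proposition1:
  fixes n1 n2 n3 r m :: nat and b c \<sigma> :: real
    and As Bs :: tensor
    and est :: "idx set \<Rightarrow> (idx \<Rightarrow> real) \<Rightarrow> tensor"
  assumes "n1 \<ge> 2" "n2 \<ge> 2" "n3 \<ge> 2" "r \<le> min n1 n2"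
    and "b > 0" "c > 0" "\<sigma> > 0"
    and "\<forall>i<n1. \<forall>l<r. \<forall>k<n3. 0 \<le> As i l k \<and> As i l k \<le> 1"
    and "\<forall>l<r. \<forall>j<n2. \<forall>k<n3. 0 \<le> Bs l j k \<and> Bs l j k \<le> b"
    and "\<forall>i<n1. \<forall>j<n2. \<forall>k<n3. 0 \<le> tprod r n3 As Bs i j k \<and> tprod r n3 As Bs i j k \<le> c / 2"
    and "4 \<le> m" "m \<le> n1 * n2 * n3"
  defines "Xs \<equiv> tprod r n3 As Bs"
    and "\<gamma> \<equiv> real m / real (n1 * n2 * n3)"
    and "\<beta> \<equiv> max 3 (1 + ln (3 * real r * real n3 powr 1.5 * b / c) / ln (real (max n1 n2)))"
    and "\<kappa> \<equiv> c\<^sup>2 / (2 * \<sigma>\<^sup>2)"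
  defines "lam \<equiv> 4 * (\<beta> + 2) * (1 + 2 * \<kappa> / 3) * ln (real (max n1 n2))"
  assumes "is_pml_estimator n1 n2 n3 r (quant_levels \<beta> n1 n2) b c \<sigma> lam est"
    and "(\<lambda>\<omega>. frob_sq n1 n2 n3 (\<lambda>i j k. est (Omega_of n1 n2 n3 \<omega>) (Y_of n1 n2 n3 \<sigma> Xs \<omega>) i j k - Xs i j k))
           \<in> borel_measurable (sample_space n1 n2 n3 \<gamma>)"
  shows "(\<integral>\<^sup>+ \<omega>. ennreal (frob_sq n1 n2 n3
              (\<lambda>i j k. est (Omega_of n1 n2 n3 \<omega>) (Y_of n1 n2 n3 \<sigma> Xs \<omega>) i j k - Xs i j k)
              / real (n1 * n2 * n3)) \<partial>sample_space n1 n2 n3 \<gamma>)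
         \<le> ennreal (22 * c\<^sup>2 * ln (real m) / real m
              + 16 * (3 * \<sigma>\<^sup>2 + 2 * c\<^sup>2) * (\<beta> + 2)
                * ((real r * real n1 * real n3 + real (l0norm r n2 n3 Bs)) / real m)
                * ln (real (max n1 n2)))"
proof (cases "r = 0")
  case True
  have "Omega_of n1 n2 n3 \<omega> \<subseteq> index_set n1 n2 n3" for \<omega>
    unfolding Omega_of_def by auto
  then show ?thesis
    using True assms(18) by (simp add: pml_estimator_rank_0 Xs_def frob_sq_def)
next
  case False
  define \<theta> where "\<theta> = quant_levels \<beta> n1 n2"
  have \<beta>: "3 \<le> \<beta>" "1 + ln (3 * real r * real n3 powr 1.5 * b / c) / ln (real (max n1 n2)) \<le> \<beta>"
    unfolding \<beta>_def by auto
  have \<theta>: "2 \<le> \<theta>" "real (max n1 n2) powr \<beta> \<le> real \<theta>"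
    unfolding \<theta>_def using \<beta> assms(1) by (auto intro: two_le_quant_levels quant_levels_bounds)
  interpret tensor_completion n1 n2 n3 r \<theta> b c \<sigma> Xs
  proof
    show "0 \<le> Xs i j k \<and> Xs i j k \<le> c" if "i < n1" "j < n2" "k < n3" for i j k
      using assms(10) that \<open>0 < c\<close> unfolding Xs_def by fastforce
  qed (use assms(3,6,7) \<theta> in auto)
  obtain AQ BQ where AQ_BQ: "feasible n1 n2 n3 r \<theta> b c AQ BQ" "l0norm r n2 n3 BQ \<le> l0norm r n2 n3 Bs"
    "\<And>t. t \<in> I \<Longrightarrow> (dev (tprod r n3 AQ BQ) t)\<^sup>2 \<le> 16 * c\<^sup>2 / (9 * real n3 * (real (max n1 n2))\<^sup>2)"
    using rounded_comparator[OF Xs_def[THEN meta_eq_to_obj_eq] \<theta> assms(5) _ assms(1) \<beta>(2) assms(8,9)] False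
    by auto
  let ?rate = "16 * (3 * \<sigma>\<^sup>2 + 2 * c\<^sup>2) * (\<beta> + 2)
    * ((real r * real n1 * real n3 + real (l0norm r n2 n3 Bs)) / real m) * ln (real (max n1 n2))"
  have "(\<integral>\<^sup>+ \<omega>. ennreal (frob_sq n1 n2 n3 (\<lambda>i j k. est (Omega_of n1 n2 n3 \<omega>) (Y_of n1 n2 n3 \<sigma> Xs \<omega>) i j k
      - Xs i j k) / real (n1 * n2 * n3)) \<partial>sample_space n1 n2 n3 \<gamma>) \<le> ennreal ?rate"
    unfolding \<gamma>_def
    by (intro expected_sq_error_rate)
       (use assms(1-3,11,12,18,19) False \<beta>(1) AQ_BQ in \<open>simp_all add: \<theta>_def \<gamma>_def lam_def \<kappa>_def\<close>)
  (* The bound holds without the term 22 c^2 ln m / m of the statement, which is nonnegative. *)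
  then show ?thesis
    by (rule order_trans) (use assms(11) in \<open>auto intro!: ennreal_leI\<close>)
qed

end
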